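(* For every $n\ge1$, $\mathcal T_{n+}$ is open in $(X_d^{(c)})^n$.
   Context: Let $d\ge2$. $E_{d+1}=\mathbb R^{d+1}$, $E^{(c)}_{d+1}=\mathbb C^{d+1}$ with bilinear form $(x,y)=x^0y^0+x^dy^d-\sum_{j=1}^{d-1}x^jy^j$. $X_d=\{x\in E_{d+1}:(x,x)=1\}$, $X_d^{(c)}=\{z\in E^{(c)}_{d+1}:(z,z)=1\}$. $G_0^{(c)}$ is the identity component of the complex group preserving the form; $\exp$ is the matrix exponential; $\ell(a\wedge b)x=a(b,x)-b(a,x)$. $\mathcal C_1=\{\ell(a\wedge b):a,b\in E_{d+1},(a,a)=(b,b)=1,(a,b)=0,a^0b^d-a^db^0>0\}$, $\mathcal C_+=\bigcup_{\rho>0}\rho\,\mathcal C_1$. $G_0^+\subset G_0^{(c)}$ is the set of finite products $\exp(\tau_1M_1)\cdots\exp(\tau_NM_N)$ with $\mathrm{Im}\,\tau_j>0$, $M_j\in\mathcal C_+$. $\mathcal T_{n+}=\{(z_1,\dots,z_n)\in(X_d^{(c)})^n:\ z_j=\Lambda_1\cdots\Lambda_jc_j\ \forall j,\ \Lambda_j\in G_0^+,\ c_j\in X_d\}$. *)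

theory Defs
  imports "HOL-Analysis.Analysis"
begin

text \<open>Vectors of E_{d+1} (resp. its complexification) are represented as functions
  nat => real (resp. nat => complex) vanishing at indices > d; coordinates are x 0, ..., x d.
  Matrices are functions nat => nat => complex with entries indexed by {0..d}.\<close>

definition vec_sp :: "nat \<Rightarrow> (nat \<Rightarrow> 'a::zero) set" where
  "vec_sp d = {x. \<forall>k>d. x k = 0}"

definition eta :: "nat \<Rightarrow> nat \<Rightarrow> 'a::{one,uminus,zero}" where
  "eta d k = (if k = 0 \<or> k = d then 1 else if k < d then - 1 else 0)"

definition bform :: "nat \<Rightarrow> (nat \<Rightarrow> 'a::comm_ring_1) \<Rightarrow> (nat \<Rightarrow> 'a) \<Rightarrow> 'a" where
  "bform d x y = x 0 * y 0 + x d * y d - (\<Sum>j\<in>{1..d-1}. x j * y j)"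

definition Xr :: "nat \<Rightarrow> (nat \<Rightarrow> real) set" where
  "Xr d = {x \<in> vec_sp d. bform d x x = 1}"

definition Xc :: "nat \<Rightarrow> (nat \<Rightarrow> complex) set" where
  "Xc d = {z \<in> vec_sp d. bform d z z = 1}"

definition cvec :: "(nat \<Rightarrow> real) \<Rightarrow> (nat \<Rightarrow> complex)" where
  "cvec x = (\<lambda>k. complex_of_real (x k))"

type_synonym cmat = "nat \<Rightarrow> nat \<Rightarrow> complex"

definition mid :: "nat \<Rightarrow> cmat" where
  "mid d = (\<lambda>i k. if i = k \<and> i \<le> d then 1 else 0)"

definition mmul :: "nat \<Rightarrow> cmat \<Rightarrow> cmat \<Rightarrow> cmat" where
  "mmul d A B = (\<lambda>i k. \<Sum>j\<le>d. A i j * B j k)"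

definition mapp :: "nat \<Rightarrow> cmat \<Rightarrow> (nat \<Rightarrow> complex) \<Rightarrow> (nat \<Rightarrow> complex)" where
  "mapp d A v = (\<lambda>i. if i \<le> d then (\<Sum>j\<le>d. A i j * v j) else 0)"

definition mscale :: "complex \<Rightarrow> cmat \<Rightarrow> cmat" where
  "mscale c A = (\<lambda>i k. c * A i k)"

fun mpow :: "nat \<Rightarrow> cmat \<Rightarrow> nat \<Rightarrow> cmat" where
  "mpow d A 0 = mid d"
| "mpow d A (Suc m) = mmul d (mpow d A m) A"

definition mexp :: "nat \<Rightarrow> cmat \<Rightarrow> cmat" where
  "mexp d A = (\<lambda>i k. \<Sum>m. mpow d A m i k / of_nat (fact m))"

text \<open>matrix of ell(a wedge b): x |-> a (b,x) - b (a,x), complexified\<close>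
definition ell :: "nat \<Rightarrow> (nat \<Rightarrow> real) \<Rightarrow> (nat \<Rightarrow> real) \<Rightarrow> cmat" where
  "ell d a b = (\<lambda>i k. if i \<le> d \<and> k \<le> d
      then complex_of_real (a i * eta d k * b k - b i * eta d k * a k) else 0)"

definition C1 :: "nat \<Rightarrow> cmat set" where
  "C1 d = {ell d a b | a b. a \<in> vec_sp d \<and> b \<in> vec_sp d \<and>
      bform d a a = 1 \<and> bform d b b = 1 \<and> bform d a b = 0 \<and> a 0 * b d - a d * b 0 > 0}"

definition Cplus :: "nat \<Rightarrow> cmat set" where
  "Cplus d = {mscale (complex_of_real \<rho>) M | \<rho> M. \<rho> > 0 \<and> M \<in> C1 d}"

definition G0plus :: "nat \<Rightarrow> cmat set" where
  "G0plus d = {foldr (\<lambda>(\<tau>, M) A. mmul d (mexp d (mscale \<tau> M)) A) ps (mid d) | ps.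
      ps \<noteq> [] \<and> (\<forall>(\<tau>, M) \<in> set ps. Im \<tau> > 0 \<and> M \<in> Cplus d)}"

fun lprod :: "nat \<Rightarrow> (nat \<Rightarrow> cmat) \<Rightarrow> nat \<Rightarrow> cmat" where
  "lprod d L 0 = mid d"
| "lprod d L (Suc j) = mmul d (lprod d L j) (L (Suc j))"

definition Xcn :: "nat \<Rightarrow> nat \<Rightarrow> (nat \<Rightarrow> nat \<Rightarrow> complex) set" where
  "Xcn d n = {z. (\<forall>j. j \<notin> {1..n} \<longrightarrow> z j = (\<lambda>_. 0)) \<and> (\<forall>j\<in>{1..n}. z j \<in> Xc d)}"

definition Tplus :: "nat \<Rightarrow> nat \<Rightarrow> (nat \<Rightarrow> nat \<Rightarrow> complex) set" where
  "Tplus d n = {z \<in> Xcn d n. \<exists>L c. \<forall>j\<in>{1..n}.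
      L j \<in> G0plus d \<and> c j \<in> Xr d \<and> z j = mapp d (lprod d L j) (cvec (c j))}"

end

(*
  Each factor exp(\<tau> M) of an element of G_0^+, with M = \<rho> \<ell>(a \<and> b) in C_+, acts as
  a complex rotation by the angle \<sigma> = \<tau> \<rho> in the positive definite plane spanned by a
  and b, so every point of T_{n+} is built from such rotations of real points.

  The heart of the proof is a continuous local inverse of (\<sigma>, a, b, c) \<mapsto> exp(\<sigma> \<ell>(a \<and> b)) c
  near any point with Im \<sigma> > 0. Writing u = x + i y = v + m (cosh \<theta> a - i sinh \<theta> b) with
  v orthogonal to a and b, the data b and \<theta> = Im \<sigma> are read off from y, v from x (on a line
  fixed by the base point) and a from x - v. Because the orthogonal complement of the
  plane of a and b is negative definite, m = sqrt (1 - (v, v)) stays positive, all these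
  quantities depend continuously on u, and the conditions Im \<sigma> > 0 and
  a^0 b^d - a^d b^0 > 0 persist near the base point.

  Composing with the remaining factors, every \<Lambda> c with \<Lambda> in G_0^+ has a neighbourhood
  on which the point is again of the form \<Lambda>(u) c(u), with \<Lambda>(u)^-1 continuous in u and equal
  to \<Lambda>^-1 at \<Lambda> c. Openness follows by induction on n: (z_1, ..., z_{n+1}) lies in
  T_{(n+1)+} as soon as z_1 = \<Lambda> c and (\<Lambda>^-1 z_2, ..., \<Lambda>^-1 z_{n+1}) lies in T_{n+}.
*)

theory Submission
  imports Defs
begin

lemma bform_sum:
  fixes x y :: "nat \<Rightarrow> 'a::comm_ring_1"
  assumes "d \<ge> 1"
  shows "bform d x y = (\<Sum>k\<le>d. eta d k * x k * y k)"
proof -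
  have split: "{..d} = insert 0 (insert d {1..d-1})" using assms by auto
  have "(\<Sum>k\<le>d. eta d k * x k * y k)
      = x 0 * y 0 + (x d * y d + (\<Sum>k\<in>{1..d-1}. eta d k * x k * y k))"
    unfolding split using assms by (subst sum.insert; auto simp: eta_def)+
  also have "(\<Sum>k\<in>{1..d-1}. eta d k * x k * y k) = (\<Sum>k\<in>{1..d-1}. - (x k * y k))"
    by (rule sum.cong) (auto simp: eta_def)
  finally show ?thesis by (simp add: bform_def sum_negf)
qed

lemma bform_sym: "bform d x y = bform d y x"
  by (simp add: bform_def mult.commute)

lemma bform_add_left: "bform d (\<lambda>i. x i + y i) z = bform d x z + bform d y z"
  and bform_add_right: "bform d z (\<lambda>i. x i + y i) = bform d z x + bform d z y"
  and bform_diff_left: "bform d (\<lambda>i. x i - y i) z = bform d x z - bform d y z"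
  and bform_diff_right: "bform d z (\<lambda>i. x i - y i) = bform d z x - bform d z y"
  and bform_minus_left: "bform d (\<lambda>i. - x i) z = - bform d x z"
  and bform_minus_right: "bform d z (\<lambda>i. - x i) = - bform d z x"
  and bform_scale_left: "bform d (\<lambda>i. c * x i) z = c * bform d x z"
  and bform_scale_right: "bform d z (\<lambda>i. c * x i) = c * bform d z x"
  and bform_scale_left': "bform d (\<lambda>i. x i * c) z = c * bform d x z"
  and bform_scale_right': "bform d z (\<lambda>i. x i * c) = c * bform d z x"
  and bform_zero_left: "bform d (\<lambda>i. 0) z = 0"
  and bform_zero_right: "bform d z (\<lambda>i. 0) = 0"
  by (simp_all add: bform_def algebra_simps sum.distrib sum_subtractf sum_negf sum_distrib_left)

lemma bform_divide_left: "bform d (\<lambda>i. x i / (c::'a::field)) z = bform d x z / c"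
  and bform_divide_right: "bform d z (\<lambda>i. x i / (c::'a::field)) = bform d z x / c"
  by (simp_all add: bform_def sum_divide_distrib add_divide_distrib diff_divide_distrib)

lemmas bform_linear = bform_add_left bform_add_right bform_diff_left bform_diff_right
  bform_minus_left bform_minus_right bform_scale_left bform_scale_right
  bform_scale_left' bform_scale_right' bform_zero_left bform_zero_right
  bform_divide_left bform_divide_right

lemma bform_cvec [simp]: "bform d (cvec x) (cvec y) = complex_of_real (bform d x y)"
  by (simp add: bform_def cvec_def)

lemma cvec_apply [simp]: "cvec x i = complex_of_real (x i)"
  by (simp add: cvec_def)

section \<open>Complex rotations in a positive plane\<close>

definition orthonormal :: "nat \<Rightarrow> (nat \<Rightarrow> real) \<Rightarrow> (nat \<Rightarrow> real) \<Rightarrow> bool" where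
  "orthonormal d a b \<longleftrightarrow> bform d a a = 1 \<and> bform d b b = 1 \<and> bform d a b = 0"

(* exp(\<sigma> \<ell>(a \<and> b)) v for orthonormal a, b, see mapp_mexp_ell *)
definition rotation :: "nat \<Rightarrow> complex \<Rightarrow> (nat \<Rightarrow> real) \<Rightarrow> (nat \<Rightarrow> real)
    \<Rightarrow> (nat \<Rightarrow> complex) \<Rightarrow> (nat \<Rightarrow> complex)" where
  "rotation d \<sigma> a b v = (\<lambda>i. v i
     + sin \<sigma> * (cvec a i * bform d (cvec b) v - cvec b i * bform d (cvec a) v)
     - (1 - cos \<sigma>) * (cvec a i * bform d (cvec a) v + cvec b i * bform d (cvec b) v))"

lemma rotation_frame:
  "rotation d \<sigma> a b v = (\<lambda>i. v i
     + (bform d (cvec a) v * (cos \<sigma> - 1) + bform d (cvec b) v * sin \<sigma>) * cvec a i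
     + (bform d (cvec b) v * (cos \<sigma> - 1) - bform d (cvec a) v * sin \<sigma>) * cvec b i)"
  unfolding rotation_def by (rule ext) (simp add: algebra_simps)

lemma orthonormal_cvec:
  assumes "orthonormal d a b"
  shows "bform d (cvec a) (cvec a) = 1" "bform d (cvec b) (cvec b) = 1"
    "bform d (cvec a) (cvec b) = 0" "bform d (cvec b) (cvec a) = 0"
  using assms by (simp_all add: orthonormal_def bform_sym[of d b a])

lemma bform_rotation_frame:
  assumes "orthonormal d a b"
  shows "bform d (cvec a) (rotation d \<sigma> a b v)
      = cos \<sigma> * bform d (cvec a) v + sin \<sigma> * bform d (cvec b) v"
    "bform d (cvec b) (rotation d \<sigma> a b v)
      = cos \<sigma> * bform d (cvec b) v - sin \<sigma> * bform d (cvec a) v"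
  unfolding rotation_frame by (simp_all only: bform_linear orthonormal_cvec[OF assms])
    (simp_all add: algebra_simps)

lemma rotation_inverse:
  assumes "orthonormal d a b"
  shows "rotation d (- \<sigma>) a b (rotation d \<sigma> a b v) = v"
proof
  fix i
  have "sin \<sigma> * sin \<sigma> + cos \<sigma> * cos \<sigma> = 1"
    using sin_cos_squared_add[of \<sigma>] by (simp add: power2_eq_square)
  then show "rotation d (- \<sigma>) a b (rotation d \<sigma> a b v) i = v i"
    unfolding rotation_frame[of d "- \<sigma>"] bform_rotation_frame[OF assms] sin_minus cos_minus
    unfolding rotation_frame by algebra
qed

lemma bform_rotation:
  assumes "orthonormal d a b"
  shows "bform d (rotation d \<sigma> a b v) (rotation d \<sigma> a b w) = bform d v w"
proof -
  have "sin \<sigma> * sin \<sigma> + cos \<sigma> * cos \<sigma> = 1"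
    using sin_cos_squared_add[of \<sigma>] by (simp add: power2_eq_square)
  moreover have "bform d v (cvec a) = bform d (cvec a) v" "bform d v (cvec b) = bform d (cvec b) v"
    by (simp_all add: bform_sym)
  ultimately show ?thesis
    unfolding rotation_frame
    by (simp only: bform_linear orthonormal_cvec[OF assms]) algebra
qed

lemma rotation_vec_sp:
  "a \<in> vec_sp d \<Longrightarrow> b \<in> vec_sp d \<Longrightarrow> v \<in> vec_sp d \<Longrightarrow> rotation d \<sigma> a b v \<in> vec_sp d"
  by (simp add: rotation_def vec_sp_def)

lemma rotation_rotate_frame:
  assumes "\<gamma> * \<gamma> + \<delta> * \<delta> = (1::real)"
  shows "rotation d \<sigma> (\<lambda>i. \<gamma> * a i + \<delta> * b i) (\<lambda>i. \<gamma> * b i - \<delta> * a i) = rotation d \<sigma> a b"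
proof (intro ext)
  fix v i
  have frame: "cvec (\<lambda>i. \<gamma> * a i + \<delta> * b i) = (\<lambda>i. of_real \<gamma> * cvec a i + of_real \<delta> * cvec b i)"
    "cvec (\<lambda>i. \<gamma> * b i - \<delta> * a i) = (\<lambda>i. of_real \<gamma> * cvec b i - of_real \<delta> * cvec a i)"
    by (simp_all add: cvec_def)
  have "complex_of_real \<gamma> * of_real \<gamma> + of_real \<delta> * of_real \<delta> = 1"
    using assms by (simp flip: of_real_mult of_real_add)
  then show "rotation d \<sigma> (\<lambda>i. \<gamma> * a i + \<delta> * b i) (\<lambda>i. \<gamma> * b i - \<delta> * a i) v i = rotation d \<sigma> a b v i"
    unfolding rotation_def frame by (simp only: bform_linear) algebra
qed

lemma sin_Re_Im:
  "sin z = complex_of_real (sin (Re z) * cosh (Im z)) + \<i> * complex_of_real (cos (Re z) * sinh (Im z))"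
  by (simp add: complex_eq_iff Re_sin Im_sin cosh_def sinh_def)

lemma cos_Re_Im:
  "cos z = complex_of_real (cos (Re z) * cosh (Im z)) - \<i> * complex_of_real (sin (Re z) * sinh (Im z))"
  by (simp add: complex_eq_iff Re_cos Im_cos cosh_def sinh_def field_simps)

lemma rotation_cvec_frame:
  assumes "orthonormal d a b" "bform d a v = 0" "bform d b v = 0"
  shows "rotation d \<sigma> a b (cvec (\<lambda>i. v i + p * a i + q * b i)) = (\<lambda>i. complex_of_real (v i)
    + (of_real p * cos \<sigma> + of_real q * sin \<sigma>) * of_real (a i)
    + (of_real q * cos \<sigma> - of_real p * sin \<sigma>) * of_real (b i))"
proof -
  have "bform d a (\<lambda>i. v i + p * a i + q * b i) = p" "bform d b (\<lambda>i. v i + p * a i + q * b i) = q"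
    using assms by (simp_all only: bform_linear orthonormal_def bform_sym[of d b a])
  then show ?thesis
    unfolding rotation_frame by (intro ext) (simp add: algebra_simps)
qed

lemma Re_Im_rotation_cvec_frame:
  fixes p q :: real and \<sigma> :: complex
  assumes "orthonormal d a b" "bform d a v = 0" "bform d b v = 0"
  defines "c \<equiv> \<lambda>i. v i + p * a i + q * b i"
    and "A \<equiv> p * cos (Re \<sigma>) + q * sin (Re \<sigma>)" and "B \<equiv> q * cos (Re \<sigma>) - p * sin (Re \<sigma>)"
  shows "(\<lambda>i. Re (rotation d \<sigma> a b (cvec c) i)) = (\<lambda>i. v i + cosh (Im \<sigma>) * A * a i + cosh (Im \<sigma>) * B * b i)"
    "(\<lambda>i. Im (rotation d \<sigma> a b (cvec c) i)) = (\<lambda>i. sinh (Im \<sigma>) * B * a i - sinh (Im \<sigma>) * A * b i)"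
proof -
  have "of_real p * cos \<sigma> + of_real q * sin \<sigma>
      = complex_of_real (cosh (Im \<sigma>) * A) + \<i> * of_real (sinh (Im \<sigma>) * B)"
    "of_real q * cos \<sigma> - of_real p * sin \<sigma>
      = complex_of_real (cosh (Im \<sigma>) * B) - \<i> * of_real (sinh (Im \<sigma>) * A)"
    unfolding sin_Re_Im[of \<sigma>] cos_Re_Im[of \<sigma>] A_def B_def
    by (simp_all add: complex_eq_iff algebra_simps)
  then show "(\<lambda>i. Re (rotation d \<sigma> a b (cvec c) i)) = (\<lambda>i. v i + cosh (Im \<sigma>) * A * a i + cosh (Im \<sigma>) * B * b i)"
    "(\<lambda>i. Im (rotation d \<sigma> a b (cvec c) i)) = (\<lambda>i. sinh (Im \<sigma>) * B * a i - sinh (Im \<sigma>) * A * b i)"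
    unfolding c_def rotation_cvec_frame[OF assms(1-3)] by simp_all
qed

section \<open>The exponential of \<open>\<ell>(a \<and> b)\<close>\<close>

definition ell_entry :: "nat \<Rightarrow> (nat \<Rightarrow> real) \<Rightarrow> (nat \<Rightarrow> real) \<Rightarrow> nat \<Rightarrow> nat \<Rightarrow> real" where
  "ell_entry d a b i k = a i * eta d k * b k - b i * eta d k * a k"

definition ell_sq_entry :: "nat \<Rightarrow> (nat \<Rightarrow> real) \<Rightarrow> (nat \<Rightarrow> real) \<Rightarrow> nat \<Rightarrow> nat \<Rightarrow> real" where
  "ell_sq_entry d a b i k = - (a i * eta d k * a k + b i * eta d k * b k)"

definition ell_sq :: "nat \<Rightarrow> (nat \<Rightarrow> real) \<Rightarrow> (nat \<Rightarrow> real) \<Rightarrow> cmat" where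
  "ell_sq d a b = (\<lambda>i k. if i \<le> d \<and> k \<le> d then complex_of_real (ell_sq_entry d a b i k) else 0)"

lemma ell_eq_entry: "ell d a b = (\<lambda>i k. if i \<le> d \<and> k \<le> d then complex_of_real (ell_entry d a b i k) else 0)"
  unfolding ell_def ell_entry_def by simp

lemma sum_ell_entry_ell_entry:
  assumes "d \<ge> 1" "orthonormal d a b"
  shows "(\<Sum>j\<le>d. ell_entry d a b i j * ell_entry d a b j k) = ell_sq_entry d a b i k"
proof -
  have "(\<Sum>j\<le>d. ell_entry d a b i j * ell_entry d a b j k) =
     (\<Sum>j\<le>d. a i * eta d k * b k * (eta d j * b j * a j) - a i * eta d k * a k * (eta d j * b j * b j)
        - b i * eta d k * b k * (eta d j * a j * a j) + b i * eta d k * a k * (eta d j * a j * b j))"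
    by (rule sum.cong) (auto simp: ell_entry_def algebra_simps)
  also have "\<dots> = a i * eta d k * b k * bform d b a - a i * eta d k * a k * bform d b b
        - b i * eta d k * b k * bform d a a + b i * eta d k * a k * bform d a b"
    by (simp add: bform_sum[OF assms(1)] sum.distrib sum_subtractf sum_distrib_left)
  finally show ?thesis
    using assms(2) by (simp add: orthonormal_def bform_sym[of d b a] ell_sq_entry_def)
qed

lemma sum_ell_sq_entry_ell_entry:
  assumes "d \<ge> 1" "orthonormal d a b"
  shows "(\<Sum>j\<le>d. ell_sq_entry d a b i j * ell_entry d a b j k) = - ell_entry d a b i k"
proof -
  have "(\<Sum>j\<le>d. ell_sq_entry d a b i j * ell_entry d a b j k) =
     (\<Sum>j\<le>d. - (a i * eta d k * b k * (eta d j * a j * a j)) + a i * eta d k * a k * (eta d j * a j * b j)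
        - b i * eta d k * b k * (eta d j * b j * a j) + b i * eta d k * a k * (eta d j * b j * b j))"
    by (rule sum.cong) (auto simp: ell_entry_def ell_sq_entry_def algebra_simps)
  also have "\<dots> = - (a i * eta d k * b k * bform d a a) + a i * eta d k * a k * bform d a b
        - b i * eta d k * b k * bform d b a + b i * eta d k * a k * bform d b b"
    by (simp add: bform_sum[OF assms(1)] sum.distrib sum_subtractf sum_distrib_left sum_negf)
  finally show ?thesis
    using assms(2) by (simp add: orthonormal_def bform_sym[of d b a] ell_entry_def)
qed

lemma mmul_ell_ell:
  assumes "d \<ge> 1" "orthonormal d a b"
  shows "mmul d (ell d a b) (ell d a b) = ell_sq d a b"
proof (intro ext)
  fix i k
  have "(\<Sum>j\<le>d. complex_of_real (ell_entry d a b i j * ell_entry d a b j k))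
      = complex_of_real (ell_sq_entry d a b i k)"
    by (simp only: of_real_sum[symmetric] sum_ell_entry_ell_entry[OF assms])
  then show "mmul d (ell d a b) (ell d a b) i k = ell_sq d a b i k"
    by (auto simp: mmul_def ell_eq_entry ell_sq_def intro: sum.cong)
qed

lemma mmul_ell_sq_ell:
  assumes "d \<ge> 1" "orthonormal d a b"
  shows "mmul d (ell_sq d a b) (ell d a b) = mscale (-1) (ell d a b)"
proof (intro ext)
  fix i k
  have "(\<Sum>j\<le>d. complex_of_real (ell_sq_entry d a b i j * ell_entry d a b j k))
      = - complex_of_real (ell_entry d a b i k)"
    by (simp only: of_real_sum[symmetric] sum_ell_sq_entry_ell_entry[OF assms] of_real_minus)
  then show "mmul d (ell_sq d a b) (ell d a b) i k = mscale (-1) (ell d a b) i k"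
    by (auto simp: mmul_def ell_eq_entry ell_sq_def mscale_def intro: sum.cong)
qed

lemma mmul_mid_left:
  assumes "\<And>i k. i > d \<or> k > d \<Longrightarrow> X i k = 0"
  shows "mmul d (mid d) X = X"
proof (intro ext)
  fix i k
  have "mmul d (mid d) X i k = (\<Sum>j\<le>d. if j = i then X i k else 0)"
    unfolding mmul_def mid_def by (intro sum.cong) auto
  also have "\<dots> = X i k" using assms[of i k] by (auto simp: sum.delta)
  finally show "mmul d (mid d) X i k = X i k" .
qed

lemma mmul_mscale_left: "mmul d (mscale c X) Y = mscale c (mmul d X Y)"
  by (simp add: mmul_def mscale_def sum_distrib_left mult.assoc)

lemma mmul_mscale_right: "mmul d X (mscale c Y) = mscale c (mmul d X Y)"
  by (simp add: mmul_def mscale_def sum_distrib_left algebra_simps)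

lemma mscale_mscale: "mscale c (mscale e X) = mscale (c * e) X"
  by (simp add: mscale_def mult.assoc)

lemma mscale_1 [simp]: "mscale 1 X = X"
  by (simp add: mscale_def)

lemma mpow_mscale: "mpow d (mscale w X) m = mscale (w ^ m) (mpow d X m)"
  by (induction m) (simp_all add: mmul_mscale_left mmul_mscale_right mscale_mscale mult.commute)

lemma mpow_ell:
  assumes "d \<ge> 1" "orthonormal d a b"
  shows "mpow d (ell d a b) (Suc (2 * q)) = mscale ((-1) ^ q) (ell d a b)"
    "mpow d (ell d a b) (2 * Suc q) = mscale ((-1) ^ q) (ell_sq d a b)"
proof (induction q)
  case 0
  have "mmul d (mid d) (ell d a b) = ell d a b" by (rule mmul_mid_left) (auto simp: ell_def)
  then show "mpow d (ell d a b) (Suc (2 * 0)) = mscale ((-1) ^ 0) (ell d a b)"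
    "mpow d (ell d a b) (2 * Suc 0) = mscale ((-1) ^ 0) (ell_sq d a b)"
    by (simp_all add: numeral_2_eq_2 mmul_ell_ell[OF assms])
next
  case (Suc q)
  then show "mpow d (ell d a b) (Suc (2 * Suc q)) = mscale ((-1) ^ Suc q) (ell d a b)"
    "mpow d (ell d a b) (2 * Suc (Suc q)) = mscale ((-1) ^ Suc q) (ell_sq d a b)"
    by (simp_all add: mmul_mscale_left mmul_ell_sq_ell[OF assms] mmul_ell_ell[OF assms] mscale_mscale)
qed

lemma mexp_series_term:
  assumes "d \<ge> 1" "orthonormal d a b"
  shows "mpow d (mscale w (ell d a b)) m i k / of_nat (fact m) =
    complex_of_real (sin_coeff m) * w ^ m * ell d a b i k
    - complex_of_real (cos_coeff m) * w ^ m * ell_sq d a b i k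
    + (if m = 0 then mid d i k + ell_sq d a b i k else 0)"
proof -
  have pow: "mpow d (mscale w (ell d a b)) m i k = w ^ m * mpow d (ell d a b) m i k"
    by (simp only: mpow_mscale) (simp add: mscale_def)
  have "m = 0 \<or> (\<exists>q. m = Suc (2 * q)) \<or> (\<exists>q. m = 2 * Suc q)"
    by presburger
  then consider "m = 0" | q where "m = Suc (2 * q)" | q where "m = 2 * Suc q"
    by blast
  then show ?thesis
  proof cases
    case 1
    then show ?thesis using pow by (simp add: sin_coeff_def cos_coeff_def)
  next
    case (2 q)
    then have "mpow d (mscale w (ell d a b)) m i k = w ^ m * ((-1) ^ q * ell d a b i k)"
      using pow by (simp only: mpow_ell[OF assms]) (simp add: mscale_def)
    then show ?thesis using 2 by (simp add: sin_coeff_def cos_coeff_def del: fact_Suc)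
  next
    case (3 q)
    then have "mpow d (mscale w (ell d a b)) m i k = w ^ m * ((-1) ^ q * ell_sq d a b i k)"
      using pow by (simp only: mpow_ell[OF assms]) (simp add: mscale_def)
    then show ?thesis using 3 by (simp add: sin_coeff_def cos_coeff_def del: fact_Suc)
  qed
qed

lemma mexp_ell:
  assumes "d \<ge> 1" "orthonormal d a b"
  shows "mexp d (mscale w (ell d a b))
      = (\<lambda>i k. mid d i k + sin w * ell d a b i k + (1 - cos w) * ell_sq d a b i k)"
proof (intro ext)
  fix i k
  have sin: "(\<lambda>n. complex_of_real (sin_coeff n) * w ^ n) sums sin w"
    using sin_converges[of w] by (simp add: scaleR_conv_of_real)
  have cos: "(\<lambda>n. complex_of_real (cos_coeff n) * w ^ n) sums cos w"
    using cos_converges[of w] by (simp add: scaleR_conv_of_real)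
  have "(\<lambda>m. mpow d (mscale w (ell d a b)) m i k / of_nat (fact m)) sums
      (sin w * ell d a b i k - cos w * ell_sq d a b i k + (mid d i k + ell_sq d a b i k))"
    unfolding mexp_series_term[OF assms]
    by (intro sums_add sums_diff sums_mult2 sin cos)
      (rule sums_single[where f = "\<lambda>_. mid d i k + ell_sq d a b i k", simplified])
  then show "mexp d (mscale w (ell d a b)) i k
      = mid d i k + sin w * ell d a b i k + (1 - cos w) * ell_sq d a b i k"
    unfolding mexp_def by (simp add: sums_iff algebra_simps)
qed

lemma mapp_mexp_ell:
  assumes "d \<ge> 1" "orthonormal d a b" "a \<in> vec_sp d" "b \<in> vec_sp d" "v \<in> vec_sp d"
  shows "mapp d (mexp d (mscale w (ell d a b))) v = rotation d w a b v"
proof (intro ext)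
  fix i
  show "mapp d (mexp d (mscale w (ell d a b))) v i = rotation d w a b v i"
  proof (cases "i \<le> d")
    case False
    then show ?thesis using assms(3-5) by (simp add: mapp_def rotation_def vec_sp_def)
  next
    case True
    have eta: "complex_of_real (eta d k) = eta d k" for k
      by (simp add: eta_def)
    have "mapp d (mexp d (mscale w (ell d a b))) v i =
       (\<Sum>j\<le>d. (mid d i j + sin w * ell d a b i j + (1 - cos w) * ell_sq d a b i j) * v j)"
      by (simp add: mapp_def mexp_ell[OF assms(1,2)] True)
    also have "\<dots> =
      (\<Sum>j\<le>d. (if j = i then v i else 0)
        + sin w * (cvec a i * (eta d j * cvec b j * v j) - cvec b i * (eta d j * cvec a j * v j))
        - (1 - cos w) * (cvec a i * (eta d j * cvec a j * v j) + cvec b i * (eta d j * cvec b j * v j)))"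
      using True
      by (intro sum.cong) (auto simp: mid_def ell_eq_entry ell_entry_def ell_sq_def ell_sq_entry_def algebra_simps eta)
    also have "\<dots> = rotation d w a b v i"
      unfolding rotation_def bform_sum[OF assms(1)] using True
      by (simp add: sum.distrib sum_subtractf sum_distrib_left algebra_simps)
    finally show ?thesis .
  qed
qed

lemma mapp_mmul: "mapp d (mmul d A B) v = mapp d A (mapp d B v)"
proof (intro ext)
  fix i
  show "mapp d (mmul d A B) v i = mapp d A (mapp d B v) i"
    unfolding mapp_def mmul_def
    by (simp add: sum_distrib_left sum_distrib_right mult.assoc) (rule impI, rule sum.swap)
qed

lemma mapp_vec_sp: "mapp d A v \<in> vec_sp d"
  by (simp add: mapp_def vec_sp_def)

lemma mapp_mid:
  assumes "v \<in> vec_sp d"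
  shows "mapp d (mid d) v = v"
proof (intro ext)
  fix i
  have "(\<Sum>j\<le>d. mid d i j * v j) = (\<Sum>j\<le>d. if j = i then v i else 0)"
    by (intro sum.cong) (auto simp: mid_def)
  then show "mapp d (mid d) v i = v i"
    using assms by (simp add: mapp_def vec_sp_def sum.delta)
qed

definition exp_prod :: "nat \<Rightarrow> (complex \<times> cmat) list \<Rightarrow> cmat" where
  "exp_prod d ps = foldr (\<lambda>(\<tau>, M) A. mmul d (mexp d (mscale \<tau> M)) A) ps (mid d)"

lemma G0plus_eq_exp_prod:
  "G0plus d = {exp_prod d ps | ps. ps \<noteq> [] \<and> (\<forall>(\<tau>, M) \<in> set ps. Im \<tau> > 0 \<and> M \<in> Cplus d)}"
  by (simp add: G0plus_def exp_prod_def)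

lemma mapp_exp_prod_Nil: "v \<in> vec_sp d \<Longrightarrow> mapp d (exp_prod d []) v = v"
  by (simp add: exp_prod_def mapp_mid)

lemma mapp_exp_prod_Cons:
  "mapp d (exp_prod d ((\<tau>, M) # ps)) v = mapp d (mexp d (mscale \<tau> M)) (mapp d (exp_prod d ps) v)"
  by (simp add: exp_prod_def mapp_mmul)

lemma mapp_exp_prod_snoc:
  "v \<in> vec_sp d \<Longrightarrow>
    mapp d (exp_prod d (ps @ [(\<tau>, M)])) v = mapp d (exp_prod d ps) (mapp d (mexp d (mscale \<tau> M)) v)"
proof (induction ps arbitrary: v)
  case Nil
  then show ?case by (simp add: mapp_exp_prod_Cons mapp_exp_prod_Nil mapp_vec_sp)
next
  case (Cons p ps)
  then show ?case by (cases p) (simp add: mapp_exp_prod_Cons)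
qed

definition C1_pair :: "nat \<Rightarrow> (nat \<Rightarrow> real) \<Rightarrow> (nat \<Rightarrow> real) \<Rightarrow> bool" where
  "C1_pair d a b \<longleftrightarrow> a \<in> vec_sp d \<and> b \<in> vec_sp d \<and> orthonormal d a b \<and> a 0 * b d - a d * b 0 > 0"

lemma C1_eq: "C1 d = {ell d a b | a b. C1_pair d a b}"
  by (auto simp: C1_def C1_pair_def orthonormal_def)

lemma Cplus_iff:
  "M \<in> Cplus d \<longleftrightarrow> (\<exists>\<rho> a b. \<rho> > 0 \<and> C1_pair d a b \<and> M = mscale (complex_of_real \<rho>) (ell d a b))"
  unfolding Cplus_def C1_eq by blast

lemma ell_in_Cplus: "C1_pair d a b \<Longrightarrow> ell d a b \<in> Cplus d"
  unfolding Cplus_iff by (rule exI[of _ 1]) auto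

lemma mapp_mexp_scaled_ell:
  assumes "d \<ge> 1" "C1_pair d a b" "v \<in> vec_sp d"
  shows "mapp d (mexp d (mscale \<tau> (mscale \<rho> (ell d a b)))) v = rotation d (\<tau> * \<rho>) a b v"
  using mapp_mexp_ell[OF assms(1), of a b v "\<tau> * \<rho>"] assms(2,3) by (simp add: mscale_mscale C1_pair_def)

lemma mexp_Cplus_inverse:
  assumes "d \<ge> 1" "M \<in> Cplus d" "v \<in> vec_sp d"
  shows "mapp d (mexp d (mscale (- \<tau>) M)) (mapp d (mexp d (mscale \<tau> M)) v) = v"
    "mapp d (mexp d (mscale \<tau> M)) (mapp d (mexp d (mscale (- \<tau>) M)) v) = v"
proof -
  obtain \<rho> a b where ab: "C1_pair d a b" and M: "M = mscale (complex_of_real \<rho>) (ell d a b)"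
    using assms(2) Cplus_iff by blast
  then have o: "orthonormal d a b" and rv: "\<And>\<sigma>. rotation d \<sigma> a b v \<in> vec_sp d"
    using assms(3) by (simp_all add: C1_pair_def rotation_vec_sp)
  show "mapp d (mexp d (mscale (- \<tau>) M)) (mapp d (mexp d (mscale \<tau> M)) v) = v"
    "mapp d (mexp d (mscale \<tau> M)) (mapp d (mexp d (mscale (- \<tau>) M)) v) = v"
    using rotation_inverse[OF o, of "\<tau> * complex_of_real \<rho>" v]
      rotation_inverse[OF o, of "- \<tau> * complex_of_real \<rho>" v]
    by (simp_all add: M mapp_mexp_scaled_ell[OF assms(1) ab] assms(3) rv)
qed

lemma bform_mexp_Cplus:
  assumes "d \<ge> 1" "M \<in> Cplus d" "v \<in> vec_sp d" "w \<in> vec_sp d"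
  shows "bform d (mapp d (mexp d (mscale \<tau> M)) v) (mapp d (mexp d (mscale \<tau> M)) w) = bform d v w"
proof -
  obtain \<rho> a b where ab: "C1_pair d a b" and M: "M = mscale (complex_of_real \<rho>) (ell d a b)"
    using assms(2) Cplus_iff by blast
  then show ?thesis
    using assms(3,4) by (simp add: mapp_mexp_scaled_ell[OF assms(1) ab] bform_rotation C1_pair_def)
qed

fun exp_prod_inv :: "nat \<Rightarrow> (complex \<times> cmat) list \<Rightarrow> (nat \<Rightarrow> complex) \<Rightarrow> (nat \<Rightarrow> complex)" where
  "exp_prod_inv d [] v = v"
| "exp_prod_inv d ((\<tau>, M) # ps) v = exp_prod_inv d ps (mapp d (mexp d (mscale (- \<tau>) M)) v)"

lemma exp_prod_inv_vec_sp: "v \<in> vec_sp d \<Longrightarrow> exp_prod_inv d ps v \<in> vec_sp d"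
  by (induction d ps v rule: exp_prod_inv.induct) (simp_all add: mapp_vec_sp)

context
  fixes d :: nat and ps :: "(complex \<times> cmat) list"
  assumes d: "d \<ge> 1" and Cplus: "\<forall>(\<tau>, M) \<in> set ps. M \<in> Cplus d"
begin

lemma mapp_exp_prod_inv: "v \<in> vec_sp d \<Longrightarrow> mapp d (exp_prod d ps) (exp_prod_inv d ps v) = v"
  using Cplus
proof (induction ps arbitrary: v)
  case (Cons p ps)
  then show ?case
    by (cases p) (simp add: mapp_exp_prod_Cons mapp_vec_sp mexp_Cplus_inverse[OF d])
qed (simp add: mapp_exp_prod_Nil)

lemma exp_prod_inv_mapp: "v \<in> vec_sp d \<Longrightarrow> exp_prod_inv d ps (mapp d (exp_prod d ps) v) = v"
  using Cplus
proof (induction ps arbitrary: v)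
  case (Cons p ps)
  then show ?case
    by (cases p) (simp add: mapp_exp_prod_Cons mapp_vec_sp mexp_Cplus_inverse[OF d])
qed (simp add: mapp_exp_prod_Nil)

lemma bform_exp_prod_inv:
  "v \<in> vec_sp d \<Longrightarrow> w \<in> vec_sp d \<Longrightarrow> bform d (exp_prod_inv d ps v) (exp_prod_inv d ps w) = bform d v w"
  using Cplus
proof (induction ps arbitrary: v w)
  case (Cons p ps)
  then show ?case
    by (cases p) (simp add: mapp_vec_sp bform_mexp_Cplus[OF d])
qed simp

end

section \<open>A local inverse of \<open>(\<sigma>, a, b, c) \<mapsto> exp(\<sigma> \<ell>(a \<and> b)) c\<close>\<close>

lemma C1_pair_orth_negative_definite:
  assumes ab: "C1_pair d a b" and v: "v \<in> vec_sp d" and "bform d v a = 0" "bform d v b = 0"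
  shows "bform d v v \<le> 0" "bform d v v = 0 \<Longrightarrow> v = (\<lambda>_. 0)"
proof -
  define D where "D = a 0 * b d - a d * b 0"
  have D: "D > 0" using ab by (simp add: C1_pair_def D_def)
  have orth: "bform d a a = 1" "bform d b b = 1" "bform d a b = 0" "bform d b a = 0"
    "bform d a v = 0" "bform d b v = 0"
    using ab assms(3,4) bform_sym[of d a b] bform_sym[of d a v] bform_sym[of d b v]
    by (simp_all add: C1_pair_def orthonormal_def)
  define \<alpha> where "\<alpha> = (b 0 * v d - v 0 * b d) / D"
  define \<beta> where "\<beta> = (a d * v 0 - a 0 * v d) / D"
  define w where "w = (\<lambda>i. \<alpha> * a i + \<beta> * b i + v i)"
  \<comment> \<open>\<open>\<alpha>\<close> and \<open>\<beta>\<close> make \<open>w 0 = w d = 0\<close>, where the form is minus a sum of squares\<close>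
  have "\<alpha> * D = b 0 * v d - v 0 * b d" "\<beta> * D = a d * v 0 - a 0 * v d"
    using D by (simp_all add: \<alpha>_def \<beta>_def)
  then have "w 0 * D = 0" "w d * D = 0"
    unfolding w_def D_def by (simp_all add: algebra_simps) algebra+
  then have w0: "w 0 = 0" and wd: "w d = 0" using D by simp_all
  have "\<alpha> * \<alpha> + \<beta> * \<beta> + bform d v v = bform d w w"
    unfolding w_def by (simp only: bform_linear orth) (simp add: assms(3,4) algebra_simps)
  also have "\<dots> = - (\<Sum>j\<in>{1..d-1}. w j * w j)"
    by (simp add: bform_def w0 wd)
  finally have vv: "bform d v v = - (\<alpha> * \<alpha> + \<beta> * \<beta> + (\<Sum>j\<in>{1..d-1}. w j * w j))"
    by simp
  have sq: "(\<Sum>j\<in>{1..d-1}. w j * w j) \<ge> 0" "\<alpha> * \<alpha> \<ge> 0" "\<beta> * \<beta> \<ge> 0"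
    by (simp_all add: sum_nonneg)
  then show "bform d v v \<le> 0" unfolding vv by linarith
  assume "bform d v v = 0"
  then have "\<alpha> * \<alpha> = 0" "\<beta> * \<beta> = 0" "(\<Sum>j\<in>{1..d-1}. w j * w j) = 0"
    using sq unfolding vv by linarith+
  then have "w = v" "\<forall>j\<in>{1..d-1}. w j = 0"
    by (simp_all add: w_def sum_nonneg_eq_0_iff)
  show "v = (\<lambda>_. 0)"
  proof
    fix j
    have "j = 0 \<or> j = d \<or> j \<in> {1..d-1} \<or> j > d" by auto
    then show "v j = 0"
      using \<open>w = v\<close> \<open>\<forall>j\<in>{1..d-1}. w j = 0\<close> w0 wd v by (auto simp: vec_sp_def)
  qed
qed

(* 0 when (w, w) = 0, since division by zero yields 0 *)
definition proj :: "nat \<Rightarrow> (nat \<Rightarrow> real) \<Rightarrow> (nat \<Rightarrow> real) \<Rightarrow> (nat \<Rightarrow> real)" where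
  "proj d w x = (\<lambda>i. bform d w x / bform d w w * w i)"

lemma bform_proj_left: "bform d (proj d w x) z = bform d w x / bform d w w * bform d w z"
  unfolding proj_def by (simp only: bform_linear)

lemma bform_proj_proj:
  "bform d (proj d w x) (proj d w x) = bform d (proj d w x) x"
proof (cases "bform d w w = 0")
  case False
  have "bform d w (proj d w x) = bform d w x"
    using False unfolding proj_def by (simp only: bform_linear) simp
  then show ?thesis
    by (simp add: bform_proj_left)
qed (simp add: proj_def bform_linear)

(*
  For u = x + i y near a base point, u = v + m (cosh \<theta> a - i sinh \<theta> b) is solved for
  v, m, \<theta>, a, b with v orthogonal to a and b and on the line of the reference vector v0
  (made orthogonal to y); with the real part s of the angle fixed, c = v + m (cos s a + sin s b).
*)
definition section_center :: "nat \<Rightarrow> (nat \<Rightarrow> real) \<Rightarrow> (nat \<Rightarrow> real) \<Rightarrow> (nat \<Rightarrow> real) \<Rightarrow> (nat \<Rightarrow> real)" where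
  "section_center d v0 x y = proj d (\<lambda>i. v0 i - proj d y v0 i) x"

definition section_radius :: "nat \<Rightarrow> (nat \<Rightarrow> real) \<Rightarrow> (nat \<Rightarrow> real) \<Rightarrow> (nat \<Rightarrow> real) \<Rightarrow> real" where
  "section_radius d v0 x y = sqrt (1 - bform d (section_center d v0 x y) (section_center d v0 x y))"

definition section_angle :: "nat \<Rightarrow> (nat \<Rightarrow> real) \<Rightarrow> (nat \<Rightarrow> real) \<Rightarrow> (nat \<Rightarrow> real) \<Rightarrow> real" where
  "section_angle d v0 x y = arsinh (sqrt (bform d y y) / section_radius d v0 x y)"

definition section_a :: "nat \<Rightarrow> (nat \<Rightarrow> real) \<Rightarrow> (nat \<Rightarrow> real) \<Rightarrow> (nat \<Rightarrow> real) \<Rightarrow> (nat \<Rightarrow> real)" where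
  "section_a d v0 x y = (\<lambda>i. (x i - section_center d v0 x y i)
     / (cosh (section_angle d v0 x y) * section_radius d v0 x y))"

definition section_b :: "nat \<Rightarrow> (nat \<Rightarrow> real) \<Rightarrow> (nat \<Rightarrow> real)" where
  "section_b d y = (\<lambda>i. - y i / sqrt (bform d y y))"

definition section_c :: "nat \<Rightarrow> (nat \<Rightarrow> real) \<Rightarrow> real \<Rightarrow> (nat \<Rightarrow> real) \<Rightarrow> (nat \<Rightarrow> real) \<Rightarrow> (nat \<Rightarrow> real)" where
  "section_c d v0 s x y = (\<lambda>i. section_center d v0 x y i
     + section_radius d v0 x y * (cos s * section_a d v0 x y i + sin s * section_b d y i))"

definition section_regular :: "nat \<Rightarrow> (nat \<Rightarrow> real) \<Rightarrow> (nat \<Rightarrow> real) \<Rightarrow> (nat \<Rightarrow> real) \<Rightarrow> bool" where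
  "section_regular d v0 x y \<longleftrightarrow> bform d y y > 0
     \<and> bform d (section_center d v0 x y) (section_center d v0 x y) < 1
     \<and> (x d - section_center d v0 x y d) * y 0 - (x 0 - section_center d v0 x y 0) * y d > 0"

lemma section_center_orth:
  assumes "bform d y y \<noteq> 0"
  shows "bform d (section_center d v0 x y) y = 0"
    "bform d (section_center d v0 x y) x = bform d (section_center d v0 x y) (section_center d v0 x y)"
proof -
  have "bform d (\<lambda>i. v0 i - proj d y v0 i) y = 0"
    using assms bform_sym[of d v0 y] by (simp only: bform_linear bform_proj_left) simp
  then show "bform d (section_center d v0 x y) y = 0"
    by (simp add: section_center_def bform_proj_left)
  show "bform d (section_center d v0 x y) x = bform d (section_center d v0 x y) (section_center d v0 x y)"
    by (simp add: section_center_def bform_proj_proj)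
qed

lemma section_decomposition:
  assumes v0: "v0 \<in> vec_sp d" and x: "x \<in> vec_sp d" and y: "y \<in> vec_sp d"
    and xy: "bform d x x - bform d y y = 1" and reg: "section_regular d v0 x y"
  defines "v \<equiv> section_center d v0 x y" and "m \<equiv> section_radius d v0 x y"
    and "\<theta> \<equiv> section_angle d v0 x y" and "a \<equiv> section_a d v0 x y" and "b \<equiv> section_b d y"
  shows "v \<in> vec_sp d" "bform d v x = bform d v v" "bform d v y = 0"
    "m > 0" "m * m = 1 - bform d v v" "\<theta> > 0"
    "(cosh \<theta> * m) * (cosh \<theta> * m) = bform d x x - bform d v v"
    "x = (\<lambda>i. v i + cosh \<theta> * m * a i)" "y = (\<lambda>i. - (sinh \<theta> * m) * b i)"
proof -
  define Y where "Y = bform d y y"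
  have Y: "Y > 0" and V: "bform d v v < 1"
    using reg by (simp_all add: section_regular_def Y_def v_def)
  show "bform d v y = 0" "bform d v x = bform d v v"
    using section_center_orth[of d y v0 x] Y by (simp_all add: v_def Y_def)
  show "v \<in> vec_sp d" using v0 x y by (simp add: v_def section_center_def proj_def vec_sp_def)
  show m: "m > 0" "m * m = 1 - bform d v v"
    using V by (simp_all add: m_def section_radius_def v_def[symmetric])
  have sinh: "sinh \<theta> * m = sqrt Y"
    using m by (simp add: \<theta>_def section_angle_def m_def[symmetric] Y_def)
  then show "\<theta> > 0" using Y m by (simp add: \<theta>_def section_angle_def m_def[symmetric] Y_def)
  define k where "k = cosh \<theta> * m"
  have "k * k = m * m + (sinh \<theta> * m) * (sinh \<theta> * m)"
    using cosh_square_eq[of \<theta>] by (simp add: k_def power2_eq_square algebra_simps)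
  then have "k * k = 1 + Y - bform d v v" using sinh m Y by simp
  then show "(cosh \<theta> * m) * (cosh \<theta> * m) = bform d x x - bform d v v"
    using xy by (simp add: Y_def k_def)
  have k: "k > 0" using m by (simp add: k_def)
  have sY: "sqrt Y > 0" using Y by simp
  have a: "a = (\<lambda>i. (x i - v i) / k)"
    by (simp add: a_def section_a_def k_def \<theta>_def m_def v_def)
  have b: "b = (\<lambda>i. - y i / sqrt Y)"
    by (simp add: b_def section_b_def Y_def)
  show "x = (\<lambda>i. v i + cosh \<theta> * m * a i)" "y = (\<lambda>i. - (sinh \<theta> * m) * b i)"
    using k sY by (simp_all add: a b sinh flip: k_def)
qed

lemma section_C1_pair:
  assumes v0: "v0 \<in> vec_sp d" and x: "x \<in> vec_sp d" and y: "y \<in> vec_sp d"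
    and xy: "bform d x x - bform d y y = 1" "bform d x y = 0" and reg: "section_regular d v0 x y"
  defines "v \<equiv> section_center d v0 x y" and "a \<equiv> section_a d v0 x y" and "b \<equiv> section_b d y"
  shows "C1_pair d a b" "bform d a v = 0" "bform d b v = 0"
proof -
  define k where "k = cosh (section_angle d v0 x y) * section_radius d v0 x y"
  define Y where "Y = bform d y y"
  note dec = section_decomposition[OF v0 x y xy(1) reg, folded v_def]
  have k: "k > 0" "k * k = bform d x x - bform d v v"
    using dec(4,7) by (simp_all add: k_def)
  have Y: "Y > 0" and ori: "(x d - v d) * y 0 - (x 0 - v 0) * y d > 0"
    using reg by (simp_all add: section_regular_def Y_def v_def)
  have sY: "sqrt Y > 0" "sqrt Y * sqrt Y = Y" using Y by simp_all
  have a: "a = (\<lambda>i. (x i - v i) / k)"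
    by (simp add: a_def section_a_def k_def v_def)
  have b: "b = (\<lambda>i. - y i / sqrt Y)"
    by (simp add: b_def section_b_def Y_def)
  have sym: "bform d x v = bform d v v" "bform d y x = 0" "bform d y v = 0"
    using dec(2,3) xy(2) by (simp_all add: bform_sym)
  have "bform d a a = (bform d x x - bform d v v) / (k * k)"
    unfolding a using k(1) by (simp only: bform_linear) (simp add: sym dec(2) field_simps)
  then have "bform d a a = 1"
    using k(1) by (simp add: k(2)[symmetric])
  moreover have "bform d b b = 1" "bform d a b = 0" "bform d a v = 0" "bform d b v = 0"
    unfolding a b using k(1) sY by (simp_all only: bform_linear) (simp_all add: sym dec(2,3) xy Y_def)
  moreover have "a 0 * b d - a d * b 0 > 0"
  proof -
    obtain r where r: "r = sqrt Y" and "r > 0" using sY by blast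
    then have "a 0 * b d - a d * b 0 = ((x d - v d) * y 0 - (x 0 - v 0) * y d) / (k * sqrt Y)"
      using k(1) by (simp add: a b field_simps flip: r)
    then show ?thesis using ori k(1) sY by simp
  qed
  moreover have "a \<in> vec_sp d" "b \<in> vec_sp d"
    using x y dec(1) by (simp_all add: a b vec_sp_def)
  ultimately show "C1_pair d a b" "bform d a v = 0" "bform d b v = 0"
    by (simp_all add: C1_pair_def orthonormal_def)
qed

lemma section_rotation:
  assumes v0: "v0 \<in> vec_sp d" and x: "x \<in> vec_sp d" and y: "y \<in> vec_sp d"
    and xy: "bform d x x - bform d y y = 1" "bform d x y = 0" and reg: "section_regular d v0 x y"
  shows "C1_pair d (section_a d v0 x y) (section_b d y)" "section_angle d v0 x y > 0"
    "section_c d v0 s x y \<in> Xr d"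
    "rotation d (of_real s + \<i> * of_real (section_angle d v0 x y)) (section_a d v0 x y) (section_b d y)
      (cvec (section_c d v0 s x y)) = (\<lambda>i. of_real (x i) + \<i> * of_real (y i))"
proof -
  define v m \<theta> a b where "v = section_center d v0 x y" and "m = section_radius d v0 x y"
    and "\<theta> = section_angle d v0 x y" and "a = section_a d v0 x y" and "b = section_b d y"
  note dec = section_decomposition[OF v0 x y xy(1) reg, folded v_def m_def \<theta>_def a_def b_def]
  note frame = section_C1_pair[OF assms, folded v_def a_def b_def]
  show "C1_pair d (section_a d v0 x y) (section_b d y)" "section_angle d v0 x y > 0"
    using frame(1) dec(6) by (simp_all add: a_def b_def \<theta>_def)
  have o: "orthonormal d a b" and ab: "a \<in> vec_sp d" "b \<in> vec_sp d"
    using frame(1) by (simp_all add: C1_pair_def)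
  have c: "section_c d v0 s x y = (\<lambda>i. v i + m * cos s * a i + m * sin s * b i)"
    by (simp add: section_c_def v_def m_def a_def b_def algebra_simps)
  have sc: "sin s * sin s + cos s * cos s = 1"
    using sin_cos_squared_add[of s] by (simp add: power2_eq_square)
  have ortho: "bform d a a = 1" "bform d b b = 1" "bform d a b = 0" "bform d b a = 0"
    "bform d v a = 0" "bform d v b = 0"
    using o frame(2,3) by (simp_all add: orthonormal_def bform_sym)
  have "bform d (section_c d v0 s x y) (section_c d v0 s x y)
      = bform d v v + (m * cos s) * (m * cos s) + (m * sin s) * (m * sin s)"
    unfolding c by (simp only: bform_linear ortho frame(2,3))
  also have "\<dots> = 1"
    using sc dec(5) by algebra
  finally show "section_c d v0 s x y \<in> Xr d"
    using dec(1) ab by (simp add: Xr_def c vec_sp_def)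
  have "complex_of_real (sin s) * of_real (sin s) + of_real (cos s) * of_real (cos s) = 1"
    using sc by (simp flip: of_real_mult of_real_add)
  then have "rotation d (of_real s + \<i> * of_real \<theta>) a b (cvec (section_c d v0 s x y))
      = (\<lambda>i. of_real (v i) + of_real (cosh \<theta> * m) * of_real (a i) + \<i> * of_real (- (sinh \<theta> * m)) * of_real (b i))"
    unfolding c rotation_cvec_frame[OF o frame(2,3)] sin_Re_Im cos_Re_Im
    by (intro ext) (simp add: algebra_simps, algebra)
  also have "\<dots> = (\<lambda>i. of_real (x i) + \<i> * of_real (y i))"
    by (rule ext) (simp add: dec(8,9))
  finally show "rotation d (of_real s + \<i> * of_real (section_angle d v0 x y)) (section_a d v0 x y)
      (section_b d y) (cvec (section_c d v0 s x y)) = (\<lambda>i. of_real (x i) + \<i> * of_real (y i))"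
    by (simp add: \<theta>_def a_def b_def)
qed

lemma section_center_eq:
  assumes "bform d v0 y = 0" "bform d v0 x = bform d v0 v0" "v0 = (\<lambda>_. 0) \<or> bform d v0 v0 \<noteq> 0"
  shows "section_center d v0 x y = v0"
proof -
  have "proj d y v0 = (\<lambda>_. 0)"
    using assms(1) bform_sym[of d y v0] by (simp add: proj_def)
  then have "section_center d v0 x y = proj d v0 x"
    by (simp add: section_center_def)
  also have "\<dots> = v0"
  proof (cases "v0 = (\<lambda>_. 0)")
    case False
    then show ?thesis using assms(2,3) by (simp add: proj_def)
  qed (simp add: proj_def)
  finally show ?thesis .
qed

lemma section_at_frame_scalars:
  assumes ab: "C1_pair d a0 b0" and v0: "bform d a0 v0 = 0" "bform d b0 v0 = 0"
    and m: "m > 0" "bform d v0 v0 = 1 - m * m" and AB: "A * A + B * B = m * m" and \<theta>: "\<theta> > 0"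
    and nz: "v0 = (\<lambda>_. 0) \<or> bform d v0 v0 \<noteq> 0"
  defines "x \<equiv> \<lambda>i. v0 i + cosh \<theta> * A * a0 i + cosh \<theta> * B * b0 i"
    and "y \<equiv> \<lambda>i. sinh \<theta> * B * a0 i - sinh \<theta> * A * b0 i"
  shows "section_center d v0 x y = v0" "section_radius d v0 x y = m"
    "sqrt (bform d y y) = sinh \<theta> * m" "section_angle d v0 x y = \<theta>"
proof -
  have ortho: "bform d a0 a0 = 1" "bform d b0 b0 = 1" "bform d a0 b0 = 0" "bform d b0 a0 = 0"
    "bform d v0 a0 = 0" "bform d v0 b0 = 0"
    using ab v0 bform_sym[of d a0 b0] bform_sym[of d a0 v0] bform_sym[of d b0 v0]
    by (simp_all add: C1_pair_def orthonormal_def)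
  have "bform d y y = sinh \<theta> * sinh \<theta> * (A * A + B * B)"
    unfolding y_def by (simp only: bform_linear ortho) algebra
  then have "bform d y y = (sinh \<theta> * m) * (sinh \<theta> * m)"
    using AB by simp
  then show sqrt_yy: "sqrt (bform d y y) = sinh \<theta> * m"
    using m \<theta> by simp
  have "bform d v0 y = 0" "bform d v0 x = bform d v0 v0"
    unfolding x_def y_def by (simp_all only: bform_linear ortho)
  then show center: "section_center d v0 x y = v0"
    using section_center_eq nz by blast
  show radius: "section_radius d v0 x y = m"
    using m by (simp add: section_radius_def center)
  show "section_angle d v0 x y = \<theta>"
    using m by (simp add: section_angle_def radius sqrt_yy arsinh_sinh_real)
qed

lemma section_at_frame:
  assumes ab: "C1_pair d a0 b0" and v0: "bform d a0 v0 = 0" "bform d b0 v0 = 0"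
    and m: "m > 0" "bform d v0 v0 = 1 - m * m" and AB: "A * A + B * B = m * m" and \<theta>: "\<theta> > 0"
    and nz: "v0 = (\<lambda>_. 0) \<or> bform d v0 v0 \<noteq> 0"
  defines "x \<equiv> \<lambda>i. v0 i + cosh \<theta> * A * a0 i + cosh \<theta> * B * b0 i"
    and "y \<equiv> \<lambda>i. sinh \<theta> * B * a0 i - sinh \<theta> * A * b0 i"
  shows "section_regular d v0 x y" "section_angle d v0 x y = \<theta>"
    "rotation d t (section_a d v0 x y) (section_b d y) = rotation d t a0 b0"
proof -
  define C S where "C = cosh \<theta>" and "S = sinh \<theta>"
  have CS: "C > 0" "S > 0" using \<theta> by (simp_all add: C_def S_def)
  note scalars = section_at_frame_scalars[OF assms(1-8), folded x_def y_def S_def]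
  show "section_angle d v0 x y = \<theta>" by (fact scalars(4))
  have "section_a d v0 x y = (\<lambda>i. (x i - v0 i) / (C * m))"
    by (simp add: section_a_def scalars C_def)
  also have "\<dots> = (\<lambda>i. A / m * a0 i + B / m * b0 i)"
    using CS m by (intro ext) (simp add: x_def field_simps flip: C_def)
  finally have a: "section_a d v0 x y = (\<lambda>i. A / m * a0 i + B / m * b0 i)" .
  have "section_b d y = (\<lambda>i. - y i / (S * m))"
    by (simp add: section_b_def scalars(3))
  also have "\<dots> = (\<lambda>i. A / m * b0 i - B / m * a0 i)"
    using CS m by (intro ext) (simp add: y_def field_simps flip: S_def)
  finally have b: "section_b d y = (\<lambda>i. A / m * b0 i - B / m * a0 i)" .
  have "A / m * (A / m) + B / m * (B / m) = 1"
    using AB m by (simp add: field_simps)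
  then show "rotation d t (section_a d v0 x y) (section_b d y) = rotation d t a0 b0"
    unfolding a b by (rule rotation_rotate_frame)
  have "(x d - v0 d) * y 0 - (x 0 - v0 0) * y d = C * S * (A * A + B * B) * (a0 0 * b0 d - a0 d * b0 0)"
    by (simp add: x_def y_def flip: C_def S_def) algebra
  then have "(x d - v0 d) * y 0 - (x 0 - v0 0) * y d > 0"
    using ab CS AB m by (simp add: C1_pair_def)
  moreover have "bform d y y > 0"
    using scalars(3) CS m real_sqrt_gt_0_iff[of "bform d y y"] by simp
  ultimately show "section_regular d v0 x y"
    using CS m by (simp add: section_regular_def scalars(1))
qed

lemma section_at_rotation:
  assumes ab: "C1_pair d a0 b0" and c0: "c0 \<in> Xr d" and \<sigma>: "Im \<sigma> > 0"
  defines "v0 \<equiv> \<lambda>i. c0 i - bform d a0 c0 * a0 i - bform d b0 c0 * b0 i"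
    and "x \<equiv> \<lambda>i. Re (rotation d \<sigma> a0 b0 (cvec c0) i)" and "y \<equiv> \<lambda>i. Im (rotation d \<sigma> a0 b0 (cvec c0) i)"
  shows "section_regular d v0 x y" "section_angle d v0 x y = Im \<sigma>"
    "rotation d t (section_a d v0 x y) (section_b d y) = rotation d t a0 b0"
    "bform d v0 y = 0" "v0 = (\<lambda>_. 0) \<or> bform d v0 v0 \<noteq> 0"
proof -
  define \<alpha> \<beta> where "\<alpha> = bform d a0 c0" and "\<beta> = bform d b0 c0"
  define A B where "A = \<alpha> * cos (Re \<sigma>) + \<beta> * sin (Re \<sigma>)" and "B = \<beta> * cos (Re \<sigma>) - \<alpha> * sin (Re \<sigma>)"
  define m where "m = sqrt (\<alpha> * \<alpha> + \<beta> * \<beta>)"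
  have o: "orthonormal d a0 b0" using ab by (simp add: C1_pair_def)
  have ortho: "bform d a0 a0 = 1" "bform d b0 b0 = 1" "bform d a0 b0 = 0" "bform d b0 a0 = 0"
    "bform d c0 a0 = \<alpha>" "bform d c0 b0 = \<beta>"
    using o bform_sym[of d a0 b0] bform_sym[of d a0 c0] bform_sym[of d b0 c0]
    by (simp_all add: orthonormal_def \<alpha>_def \<beta>_def)
  have v0: "v0 = (\<lambda>i. c0 i - \<alpha> * a0 i - \<beta> * b0 i)" by (simp add: v0_def \<alpha>_def \<beta>_def)
  have v0_orth: "bform d a0 v0 = 0" "bform d b0 v0 = 0" "bform d v0 a0 = 0" "bform d v0 b0 = 0"
    unfolding v0 by (simp_all only: bform_linear ortho) (simp_all add: \<alpha>_def \<beta>_def)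
  have "bform d v0 v0 = 1 - (\<alpha> * \<alpha> + \<beta> * \<beta>)"
    using c0 unfolding v0 Xr_def by (simp only: bform_linear ortho mem_Collect_eq) (simp add: \<alpha>_def \<beta>_def bform_sym[of d c0 a0] bform_sym[of d c0 b0])
  moreover have "v0 \<in> vec_sp d"
    using ab c0 by (simp add: v0 C1_pair_def Xr_def vec_sp_def)
  note neg = C1_pair_orth_negative_definite[OF ab this v0_orth(3,4)]
  show nz: "v0 = (\<lambda>_. 0) \<or> bform d v0 v0 \<noteq> 0" using neg(2) by blast
  ultimately have m: "m > 0" "bform d v0 v0 = 1 - m * m"
    using neg(1) by (simp_all add: m_def)
  have "A * A + B * B = (\<alpha> * \<alpha> + \<beta> * \<beta>) * (sin (Re \<sigma>) * sin (Re \<sigma>) + cos (Re \<sigma>) * cos (Re \<sigma>))"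
    unfolding A_def B_def by algebra
  then have AB: "A * A + B * B = m * m"
    using m_def by (simp add: sin_cos_squared_add[unfolded power2_eq_square])
  have "c0 = (\<lambda>i. v0 i + \<alpha> * a0 i + \<beta> * b0 i)" by (simp add: v0)
  then have xy: "x = (\<lambda>i. v0 i + cosh (Im \<sigma>) * A * a0 i + cosh (Im \<sigma>) * B * b0 i)"
    "y = (\<lambda>i. sinh (Im \<sigma>) * B * a0 i - sinh (Im \<sigma>) * A * b0 i)"
    using Re_Im_rotation_cvec_frame[OF o v0_orth(1,2), where p = \<alpha> and q = \<beta> and \<sigma> = \<sigma>]
    by (simp_all add: x_def y_def A_def B_def)
  show "section_regular d v0 x y" "section_angle d v0 x y = Im \<sigma>"
    "rotation d t (section_a d v0 x y) (section_b d y) = rotation d t a0 b0"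
    unfolding xy using section_at_frame[OF ab v0_orth(1,2) m AB \<sigma> nz] by simp_all
  show "bform d v0 y = 0"
    unfolding xy by (simp only: bform_linear v0_orth)
qed

section \<open>Continuity of the local inverse\<close>

lemma tendsto_fun_iff:
  fixes f :: "'a \<Rightarrow> 'i \<Rightarrow> 'b::topological_space"
  shows "(f \<longlongrightarrow> l) F \<longleftrightarrow> (\<forall>i. ((\<lambda>x. f x i) \<longlongrightarrow> l i) F)"
  using limitin_componentwise[of "\<lambda>i. euclidean" UNIV f l F]
  by (simp add: euclidean_product_topology)

lemma tendsto_bform:
  fixes X Y :: "'b \<Rightarrow> nat \<Rightarrow> 'a::real_normed_field"
  assumes "(X \<longlongrightarrow> X0) F" "(Y \<longlongrightarrow> Y0) F"
  shows "((\<lambda>t. bform d (X t) (Y t)) \<longlongrightarrow> bform d X0 Y0) F"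
  using assms unfolding tendsto_fun_iff bform_def by (auto intro!: tendsto_intros)

lemma tendsto_cvec: "(x \<longlongrightarrow> x0) F \<Longrightarrow> ((\<lambda>t. cvec (x t)) \<longlongrightarrow> cvec x0) F"
  unfolding tendsto_fun_iff by (auto intro!: tendsto_intros)

lemma tendsto_mapp: "(v \<longlongrightarrow> v0) F \<Longrightarrow> ((\<lambda>t. mapp d A (v t)) \<longlongrightarrow> mapp d A v0) F"
  unfolding tendsto_fun_iff mapp_def by (auto intro!: tendsto_intros)

lemma tendsto_exp_prod_inv:
  "(v \<longlongrightarrow> v0) F \<Longrightarrow> ((\<lambda>t. exp_prod_inv d ps (v t)) \<longlongrightarrow> exp_prod_inv d ps v0) F"
proof (induction ps arbitrary: v v0)
  case (Cons p ps)
  then show ?case by (cases p) (simp add: tendsto_mapp)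
qed simp

lemma tendsto_rotation:
  assumes "(\<sigma> \<longlongrightarrow> \<sigma>0) F" "(a \<longlongrightarrow> a0) F" "(b \<longlongrightarrow> b0) F" "(v \<longlongrightarrow> v0) F"
  shows "((\<lambda>t. rotation d (\<sigma> t) (a t) (b t) (v t)) \<longlongrightarrow> rotation d \<sigma>0 a0 b0 v0) F"
proof -
  have "((\<lambda>t. bform d (cvec (a t)) (v t)) \<longlongrightarrow> bform d (cvec a0) v0) F"
    "((\<lambda>t. bform d (cvec (b t)) (v t)) \<longlongrightarrow> bform d (cvec b0) v0) F"
    using tendsto_bform tendsto_cvec assms(2-4) by blast+
  moreover have "((\<lambda>t. sin (\<sigma> t)) \<longlongrightarrow> sin \<sigma>0) F" "((\<lambda>t. cos (\<sigma> t)) \<longlongrightarrow> cos \<sigma>0) F"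
    using isCont_tendsto_compose[OF isCont_sin assms(1)] isCont_tendsto_compose[OF isCont_cos assms(1)] .
  ultimately show ?thesis
    using assms unfolding rotation_def tendsto_fun_iff[of a] tendsto_fun_iff[of b] tendsto_fun_iff[of v]
    by (subst tendsto_fun_iff) (auto intro!: tendsto_intros)
qed

lemma tendsto_proj:
  assumes "(w \<longlongrightarrow> w0) F" "bform d w0 w0 \<noteq> 0" "(x \<longlongrightarrow> x0) F"
  shows "((\<lambda>t. proj d (w t) (x t)) \<longlongrightarrow> proj d w0 x0) F"
  using assms tendsto_bform[OF assms(1,3)] tendsto_bform[OF assms(1,1)]
  unfolding tendsto_fun_iff[of w] proj_def by (subst tendsto_fun_iff) (auto intro!: tendsto_intros)

lemma tendsto_section_center:
  assumes "bform d y0 y0 \<noteq> 0" "bform d v0 y0 = 0" "v0 = (\<lambda>_. 0) \<or> bform d v0 v0 \<noteq> 0"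
    and "(x \<longlongrightarrow> x0) F" "(y \<longlongrightarrow> y0) F"
  shows "((\<lambda>t. section_center d v0 (x t) (y t)) \<longlongrightarrow> section_center d v0 x0 y0) F"
proof (cases "v0 = (\<lambda>_. 0)")
  case True
  then show ?thesis by (simp add: section_center_def proj_def bform_def)
next
  case False
  have "proj d y0 v0 = (\<lambda>_. 0)"
    using assms(2) bform_sym[of d y0 v0] by (simp add: proj_def)
  then have "((\<lambda>t. \<lambda>i. v0 i - proj d (y t) v0 i) \<longlongrightarrow> v0) F"
    using tendsto_proj[OF assms(5,1) tendsto_const[of v0]]
    unfolding tendsto_fun_iff[of "\<lambda>t. proj d (y t) v0"] by (subst tendsto_fun_iff) (auto intro!: tendsto_eq_intros)
  moreover have "(\<lambda>i. v0 i - proj d y0 v0 i) = v0"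
    using \<open>proj d y0 v0 = (\<lambda>_. 0)\<close> by simp
  ultimately show ?thesis
    unfolding section_center_def using tendsto_proj assms(3,4) False by metis
qed

lemma tendsto_section:
  assumes reg: "section_regular d v0 x0 y0" and v0: "bform d v0 y0 = 0" "v0 = (\<lambda>_. 0) \<or> bform d v0 v0 \<noteq> 0"
    and x: "(x \<longlongrightarrow> x0) F" and y: "(y \<longlongrightarrow> y0) F"
  shows "((\<lambda>t. section_angle d v0 (x t) (y t)) \<longlongrightarrow> section_angle d v0 x0 y0) F"
    "((\<lambda>t. section_a d v0 (x t) (y t)) \<longlongrightarrow> section_a d v0 x0 y0) F"
    "((\<lambda>t. section_b d (y t)) \<longlongrightarrow> section_b d y0) F"
    "\<forall>\<^sub>F t in F. section_regular d v0 (x t) (y t)"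
proof -
  define v where "v = (\<lambda>t. section_center d v0 (x t) (y t))"
  define m where "m = (\<lambda>t. section_radius d v0 (x t) (y t))"
  have vm: "section_center d v0 (x t) (y t) = v t" "section_radius d v0 (x t) (y t) = m t" for t
    by (simp_all add: v_def m_def)
  have Y0: "bform d y0 y0 > 0" and V0: "bform d (section_center d v0 x0 y0) (section_center d v0 x0 y0) < 1"
    and O0: "(x0 d - section_center d v0 x0 y0 d) * y0 0 - (x0 0 - section_center d v0 x0 y0 0) * y0 d > 0"
    using reg by (simp_all add: section_regular_def)
  have yy: "((\<lambda>t. bform d (y t) (y t)) \<longlongrightarrow> bform d y0 y0) F"
    using tendsto_bform[OF y y] .
  have v: "(v \<longlongrightarrow> section_center d v0 x0 y0) F"
    using tendsto_section_center[OF _ v0 x y] Y0 by (simp add: v_def)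
  have vv: "((\<lambda>t. bform d (v t) (v t)) \<longlongrightarrow> bform d (section_center d v0 x0 y0) (section_center d v0 x0 y0)) F"
    using tendsto_bform[OF v v] .
  have m: "(m \<longlongrightarrow> section_radius d v0 x0 y0) F"
    unfolding m_def section_radius_def vm(1) using vv by (intro tendsto_intros)
  have m0: "section_radius d v0 x0 y0 > 0"
    using V0 by (simp add: section_radius_def)
  show angle: "((\<lambda>t. section_angle d v0 (x t) (y t)) \<longlongrightarrow> section_angle d v0 x0 y0) F"
    unfolding section_angle_def vm(2) using yy m m0 by (intro tendsto_intros) auto
  have xi: "\<And>i. ((\<lambda>t. x t i) \<longlongrightarrow> x0 i) F" and yi: "\<And>i. ((\<lambda>t. y t i) \<longlongrightarrow> y0 i) F"
    and vi: "\<And>i. ((\<lambda>t. v t i) \<longlongrightarrow> section_center d v0 x0 y0 i) F"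
    using x y v by (simp_all add: tendsto_fun_iff)
  show "((\<lambda>t. section_a d v0 (x t) (y t)) \<longlongrightarrow> section_a d v0 x0 y0) F"
    unfolding section_a_def vm(1) vm(2) tendsto_fun_iff
    using xi vi angle m m0 by (auto intro!: tendsto_intros)
  show "((\<lambda>t. section_b d (y t)) \<longlongrightarrow> section_b d y0) F"
    unfolding section_b_def tendsto_fun_iff using yi yy Y0 by (auto intro!: tendsto_intros)
  have "((\<lambda>t. (x t d - v t d) * y t 0 - (x t 0 - v t 0) * y t d)
      \<longlongrightarrow> (x0 d - section_center d v0 x0 y0 d) * y0 0 - (x0 0 - section_center d v0 x0 y0 0) * y0 d) F"
    using xi yi vi by (intro tendsto_intros)
  from order_tendstoD(1)[OF this O0] order_tendstoD(1)[OF yy Y0] order_tendstoD(2)[OF vv V0]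
  show "\<forall>\<^sub>F t in F. section_regular d v0 (x t) (y t)"
    by eventually_elim (simp add: section_regular_def v_def)
qed

lemma Xc_Re_Im:
  assumes "u \<in> Xc d"
  defines "x \<equiv> \<lambda>i. Re (u i)" and "y \<equiv> \<lambda>i. Im (u i)"
  shows "x \<in> vec_sp d" "y \<in> vec_sp d" "bform d x x - bform d y y = 1" "bform d x y = 0"
proof -
  show "x \<in> vec_sp d" "y \<in> vec_sp d"
    using assms(1) by (auto simp: x_def y_def Xc_def vec_sp_def)
  have u: "u = (\<lambda>i. cvec x i + \<i> * cvec y i)"
    by (rule ext) (simp add: x_def y_def complex_eq_iff)
  have "bform d u u = complex_of_real (bform d x x - bform d y y) + \<i> * complex_of_real (2 * bform d x y)"
    unfolding u using bform_sym[of d x y]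
    by (simp only: bform_linear bform_cvec) (simp add: algebra_simps)
  then show "bform d x x - bform d y y = 1" "bform d x y = 0"
    using assms(1) by (simp_all add: Xc_def complex_eq_iff)
qed

lemma rotation_local_section:
  assumes ab0: "C1_pair d a0 b0" and c0: "c0 \<in> Xr d" and \<sigma>0: "Im \<sigma>0 > 0"
  defines "u0 \<equiv> rotation d \<sigma>0 a0 b0 (cvec c0)"
  obtains \<sigma> :: "(nat \<Rightarrow> complex) \<Rightarrow> complex" and a b c :: "(nat \<Rightarrow> complex) \<Rightarrow> nat \<Rightarrow> real" where
    "\<forall>\<^sub>F u in nhds u0. u \<in> Xc d \<longrightarrow>
      Im (\<sigma> u) > 0 \<and> C1_pair d (a u) (b u) \<and> c u \<in> Xr d \<and> rotation d (\<sigma> u) (a u) (b u) (cvec (c u)) = u"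
    "\<sigma> u0 = \<sigma>0" "\<forall>t. rotation d t (a u0) (b u0) = rotation d t a0 b0"
    "isCont \<sigma> u0" "isCont a u0" "isCont b u0"
proof -
  define v0 where "v0 = (\<lambda>i. c0 i - bform d a0 c0 * a0 i - bform d b0 c0 * b0 i)"
  \<comment> \<open>this choice of reference vector makes the inverse return \<open>\<sigma>0\<close> and the plane of \<open>a0, b0\<close> at \<open>u0\<close>\<close>
  define x y where "x u = (\<lambda>i. Re (u i))" and "y u = (\<lambda>i. Im (u i))" for u :: "nat \<Rightarrow> complex"
  define \<sigma> where "\<sigma> = (\<lambda>u. of_real (Re \<sigma>0) + \<i> * of_real (section_angle d v0 (x u) (y u)))"
  define a where "a = (\<lambda>u. section_a d v0 (x u) (y u))"
  define b where "b = (\<lambda>u. section_b d (y u))"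
  define c where "c = (\<lambda>u. section_c d v0 (Re \<sigma>0) (x u) (y u))"
  note base = section_at_rotation[OF ab0 c0 \<sigma>0, folded v0_def u0_def, folded x_def y_def]
  have v0: "v0 \<in> vec_sp d"
    using ab0 c0 by (simp add: v0_def C1_pair_def Xr_def vec_sp_def)
  have xy: "((\<lambda>u. x (U u)) \<longlongrightarrow> x u0) F" "((\<lambda>u. y (U u)) \<longlongrightarrow> y u0) F"
    if "(U \<longlongrightarrow> u0) F" for U :: "'a \<Rightarrow> nat \<Rightarrow> complex" and F
    using that unfolding x_def y_def tendsto_fun_iff by (auto intro!: tendsto_intros)
  note sec = tendsto_section[OF base(1,4,5)]
  have "\<forall>\<^sub>F u in nhds u0. section_regular d v0 (x u) (y u)"
    using sec(4)[OF xy[OF filterlim_ident]] .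
  moreover have "Im (\<sigma> u) > 0 \<and> C1_pair d (a u) (b u) \<and> c u \<in> Xr d
      \<and> rotation d (\<sigma> u) (a u) (b u) (cvec (c u)) = u"
    if "u \<in> Xc d" "section_regular d v0 (x u) (y u)" for u
  proof -
    note parts = Xc_Re_Im[OF that(1), folded x_def y_def]
    have "(\<lambda>i. complex_of_real (x u i) + \<i> * of_real (y u i)) = u"
      by (rule ext) (simp add: x_def y_def complex_eq_iff)
    then show ?thesis
      using section_rotation(1,2)[OF v0 parts that(2)] section_rotation(3,4)[OF v0 parts that(2), of "Re \<sigma>0"]
      by (simp add: \<sigma>_def a_def b_def c_def)
  qed
  ultimately have "\<forall>\<^sub>F u in nhds u0. u \<in> Xc d \<longrightarrow>
      Im (\<sigma> u) > 0 \<and> C1_pair d (a u) (b u) \<and> c u \<in> Xr d \<and> rotation d (\<sigma> u) (a u) (b u) (cvec (c u)) = u"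
    by (auto elim: eventually_mono)
  moreover have "\<sigma> u0 = \<sigma>0"
    using base(2) by (simp add: \<sigma>_def complex_eq_iff)
  moreover have "\<forall>t. rotation d t (a u0) (b u0) = rotation d t a0 b0"
    using base(3) by (simp add: a_def b_def)
  moreover note at_u0 = xy[OF tendsto_ident_at]
  have "isCont \<sigma> u0" "isCont a u0" "isCont b u0"
    unfolding isCont_def using sec(1-3)[OF at_u0]
    by (auto simp: \<sigma>_def a_def b_def intro!: tendsto_intros)
  ultimately show thesis by (rule that)
qed

section \<open>Local inverses for \<open>G\<^sub>0\<^sup>+\<close>\<close>

lemma G0plus_decompose:
  assumes "d \<ge> 1" "\<Lambda> \<in> G0plus d"
  obtains qs \<sigma> a b where "\<forall>(\<tau>, M) \<in> set qs. Im \<tau> > 0 \<and> M \<in> Cplus d" "Im \<sigma> > 0" "C1_pair d a b"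
    "\<forall>v\<in>vec_sp d. mapp d \<Lambda> v = mapp d (exp_prod d qs) (rotation d \<sigma> a b v)"
proof -
  obtain ps where ps: "ps \<noteq> []" "\<forall>(\<tau>, M) \<in> set ps. Im \<tau> > 0 \<and> M \<in> Cplus d" and \<Lambda>: "\<Lambda> = exp_prod d ps"
    using assms(2) by (auto simp: G0plus_eq_exp_prod)
  obtain qs \<tau> M where qs: "ps = qs @ [(\<tau>, M)]"
    using ps(1) by (metis rev_exhaust surj_pair)
  then have "M \<in> Cplus d" "Im \<tau> > 0" using ps(2) by auto
  then obtain \<rho> a b where ab: "\<rho> > 0" "C1_pair d a b" and M: "M = mscale (complex_of_real \<rho>) (ell d a b)"
    using Cplus_iff by blast
  have "mapp d \<Lambda> v = mapp d (exp_prod d qs) (rotation d (\<tau> * of_real \<rho>) a b v)" if "v \<in> vec_sp d" for v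
    using that by (simp add: \<Lambda> qs mapp_exp_prod_snoc M mapp_mexp_scaled_ell[OF assms(1) ab(2)])
  moreover have "\<forall>(\<tau>, M) \<in> set qs. Im \<tau> > 0 \<and> M \<in> Cplus d" using ps(2) qs by auto
  moreover have "Im (\<tau> * of_real \<rho>) > 0" using \<open>Im \<tau> > 0\<close> ab(1) by simp
  ultimately show thesis using ab(2) by (intro that) auto
qed

lemma G0plus_snoc_representation:
  assumes d: "d \<ge> 1" and qs: "\<forall>(\<tau>, M) \<in> set qs. Im \<tau> > 0 \<and> M \<in> Cplus d" and u: "u \<in> Xc d"
    and \<sigma>: "Im \<sigma> > 0" and ab: "C1_pair d a b" and c: "c \<in> Xr d"
    and rot: "rotation d \<sigma> a b (cvec c) = exp_prod_inv d qs u"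
  defines "R \<equiv> \<lambda>v. rotation d (- \<sigma>) a b (exp_prod_inv d qs v)"
  shows "\<exists>\<Lambda>\<in>G0plus d. \<exists>c\<in>Xr d. u = mapp d \<Lambda> (cvec c) \<and> (\<forall>v\<in>vec_sp d. mapp d \<Lambda> (R v) = v)"
    "\<forall>v\<in>Xc d. R v \<in> Xc d"
proof -
  define \<Lambda> where "\<Lambda> = exp_prod d (qs @ [(\<sigma>, ell d a b)])"
  have qsC: "\<forall>(\<tau>, M) \<in> set qs. M \<in> Cplus d" using qs by auto
  have o: "orthonormal d a b" and abv: "a \<in> vec_sp d" "b \<in> vec_sp d"
    using ab by (simp_all add: C1_pair_def)
  have \<Lambda>_apply: "mapp d \<Lambda> w = mapp d (exp_prod d qs) (rotation d \<sigma> a b w)" if "w \<in> vec_sp d" for w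
    using that o abv by (simp add: \<Lambda>_def mapp_exp_prod_snoc mapp_mexp_ell[OF d])
  have "\<Lambda> \<in> G0plus d"
    unfolding \<Lambda>_def G0plus_eq_exp_prod using qs \<sigma> ell_in_Cplus[OF ab]
    by (intro CollectI exI[of _ "qs @ [(\<sigma>, ell d a b)]"]) auto
  moreover have "cvec c \<in> vec_sp d" "u \<in> vec_sp d"
    using c u by (simp_all add: Xr_def Xc_def vec_sp_def cvec_def)
  then have "u = mapp d \<Lambda> (cvec c)"
    using rot mapp_exp_prod_inv[OF d qsC] by (simp add: \<Lambda>_apply)
  moreover have "mapp d \<Lambda> (R v) = v" if "v \<in> vec_sp d" for v
    using rotation_inverse[OF o, of "- \<sigma>"] mapp_exp_prod_inv[OF d qsC that]
      rotation_vec_sp[OF abv exp_prod_inv_vec_sp[OF that]]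
    by (simp add: \<Lambda>_apply R_def)
  ultimately show "\<exists>\<Lambda>\<in>G0plus d. \<exists>c\<in>Xr d. u = mapp d \<Lambda> (cvec c) \<and> (\<forall>v\<in>vec_sp d. mapp d \<Lambda> (R v) = v)"
    using c by blast
  show "\<forall>v\<in>Xc d. R v \<in> Xc d"
    using o abv exp_prod_inv_vec_sp bform_exp_prod_inv[OF d qsC]
    by (simp add: R_def Xc_def rotation_vec_sp bform_rotation)
qed

lemma eventually_G0plus_snoc_representation:
  assumes d: "d \<ge> 1" and qs: "\<forall>(\<tau>, M) \<in> set qs. Im \<tau> > 0 \<and> M \<in> Cplus d"
    and ev: "\<forall>\<^sub>F u in nhds (exp_prod_inv d qs u0). u \<in> Xc d \<longrightarrow> Im (\<sigma> u) > 0
      \<and> C1_pair d (a u) (b u) \<and> c u \<in> Xr d \<and> rotation d (\<sigma> u) (a u) (b u) (cvec (c u)) = u"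
  defines "R \<equiv> \<lambda>u v. rotation d (- \<sigma> (exp_prod_inv d qs u)) (a (exp_prod_inv d qs u)) (b (exp_prod_inv d qs u))
      (exp_prod_inv d qs v)"
  shows "\<forall>\<^sub>F u in nhds u0. u \<in> Xc d \<longrightarrow>
      (\<exists>\<Lambda>\<in>G0plus d. \<exists>c\<in>Xr d. u = mapp d \<Lambda> (cvec c) \<and> (\<forall>v\<in>vec_sp d. mapp d \<Lambda> (R u v) = v))
      \<and> (\<forall>v\<in>Xc d. R u v \<in> Xc d)"
  using eventually_compose_filterlim[OF ev tendsto_exp_prod_inv[OF filterlim_ident]]
proof eventually_elim
  case (elim u)
  show ?case
  proof
    assume u: "u \<in> Xc d"
    have "\<forall>(\<tau>, M) \<in> set qs. M \<in> Cplus d" using qs by auto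
    with u have "exp_prod_inv d qs u \<in> Xc d"
      using exp_prod_inv_vec_sp bform_exp_prod_inv[OF d] by (simp add: Xc_def)
    with elim have "Im (\<sigma> (exp_prod_inv d qs u)) > 0"
      "C1_pair d (a (exp_prod_inv d qs u)) (b (exp_prod_inv d qs u))" "c (exp_prod_inv d qs u) \<in> Xr d"
      "rotation d (\<sigma> (exp_prod_inv d qs u)) (a (exp_prod_inv d qs u)) (b (exp_prod_inv d qs u))
        (cvec (c (exp_prod_inv d qs u))) = exp_prod_inv d qs u"
      by blast+
    from G0plus_snoc_representation[OF d qs u this]
    show "(\<exists>\<Lambda>\<in>G0plus d. \<exists>c\<in>Xr d. u = mapp d \<Lambda> (cvec c) \<and> (\<forall>v\<in>vec_sp d. mapp d \<Lambda> (R u v) = v))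
      \<and> (\<forall>v\<in>Xc d. R u v \<in> Xc d)"
      by (simp add: R_def)
  qed
qed

lemma G0plus_local_section:
  assumes d: "d \<ge> 1" and \<Lambda>0: "\<Lambda>0 \<in> G0plus d" and c0: "c0 \<in> Xr d"
  defines "u0 \<equiv> mapp d \<Lambda>0 (cvec c0)"
  obtains R :: "(nat \<Rightarrow> complex) \<Rightarrow> (nat \<Rightarrow> complex) \<Rightarrow> nat \<Rightarrow> complex" where
    "\<forall>\<^sub>F u in nhds u0. u \<in> Xc d \<longrightarrow>
      (\<exists>\<Lambda>\<in>G0plus d. \<exists>c\<in>Xr d. u = mapp d \<Lambda> (cvec c) \<and> (\<forall>v\<in>vec_sp d. mapp d \<Lambda> (R u v) = v))
      \<and> (\<forall>v\<in>Xc d. R u v \<in> Xc d)"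
    "\<And>v. v \<in> vec_sp d \<Longrightarrow> R u0 (mapp d \<Lambda>0 v) = v"
    "\<And>F U V v. (U \<longlongrightarrow> u0) F \<Longrightarrow> (V \<longlongrightarrow> v) F \<Longrightarrow> ((\<lambda>t. R (U t) (V t)) \<longlongrightarrow> R u0 v) F"
proof -
  obtain qs \<sigma>0 a0 b0 where qs: "\<forall>(\<tau>, M) \<in> set qs. Im \<tau> > 0 \<and> M \<in> Cplus d"
    and \<sigma>0: "Im \<sigma>0 > 0" and ab0: "C1_pair d a0 b0"
    and \<Lambda>0_apply: "\<forall>v\<in>vec_sp d. mapp d \<Lambda>0 v = mapp d (exp_prod d qs) (rotation d \<sigma>0 a0 b0 v)"
    by (rule G0plus_decompose[OF d \<Lambda>0])
  define P where "P = exp_prod_inv d qs"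
  have qsC: "\<forall>(\<tau>, M) \<in> set qs. M \<in> Cplus d" using qs by auto
  have P_mapp: "P (mapp d \<Lambda>0 v) = rotation d \<sigma>0 a0 b0 v" if "v \<in> vec_sp d" for v
    using that \<Lambda>0_apply exp_prod_inv_mapp[OF d qsC] ab0 by (simp add: P_def C1_pair_def rotation_vec_sp)
  have "cvec c0 \<in> vec_sp d" using c0 by (simp add: Xr_def vec_sp_def cvec_def)
  note Pu0 = P_mapp[OF this, folded u0_def]
  obtain \<sigma> a b c where
    ev: "\<forall>\<^sub>F u in nhds (P u0). u \<in> Xc d \<longrightarrow> Im (\<sigma> u) > 0 \<and> C1_pair d (a u) (b u) \<and> c u \<in> Xr d
      \<and> rotation d (\<sigma> u) (a u) (b u) (cvec (c u)) = u"
    and base: "\<sigma> (P u0) = \<sigma>0" "\<forall>t. rotation d t (a (P u0)) (b (P u0)) = rotation d t a0 b0"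
    and cont: "isCont \<sigma> (P u0)" "isCont a (P u0)" "isCont b (P u0)"
    by (rule rotation_local_section[OF ab0 c0 \<sigma>0, folded Pu0])
  define R where "R u v = rotation d (- \<sigma> (P u)) (a (P u)) (b (P u)) (P v)" for u v
  have P_tendsto: "((\<lambda>t. P (U t)) \<longlongrightarrow> P u) F" if "(U \<longlongrightarrow> u) F" for U u F
    using tendsto_exp_prod_inv[OF that] by (simp add: P_def)
  show thesis
  proof (rule that)
    show "\<forall>\<^sub>F u in nhds u0. u \<in> Xc d \<longrightarrow>
      (\<exists>\<Lambda>\<in>G0plus d. \<exists>c\<in>Xr d. u = mapp d \<Lambda> (cvec c) \<and> (\<forall>v\<in>vec_sp d. mapp d \<Lambda> (R u v) = v))
      \<and> (\<forall>v\<in>Xc d. R u v \<in> Xc d)"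
      using eventually_G0plus_snoc_representation[OF d qs ev[unfolded P_def]] by (simp add: R_def P_def)
    show "R u0 (mapp d \<Lambda>0 v) = v" if "v \<in> vec_sp d" for v
      using that base rotation_inverse[of d a0 b0] ab0 by (simp add: R_def P_mapp C1_pair_def)
    show "((\<lambda>t. R (U t) (V t)) \<longlongrightarrow> R u0 v) F" if "(U \<longlongrightarrow> u0) F" "(V \<longlongrightarrow> v) F" for F U V v
      unfolding R_def using P_tendsto[OF that(2)]
      by (intro tendsto_rotation tendsto_minus isCont_tendsto_compose[OF _ P_tendsto[OF that(1)]] cont)
  qed
qed

section \<open>Openness of \<open>T\<^sub>n\<^sub>+\<close>\<close>

lemma mapp_lprod_Suc:
  "v \<in> vec_sp d \<Longrightarrow> mapp d (lprod d L (Suc j)) v = mapp d (L 1) (mapp d (lprod d (\<lambda>i. L (Suc i)) j) v)"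
proof (induction j arbitrary: v)
  case 0
  then show ?case by (simp add: mapp_mmul mapp_mid mapp_vec_sp)
next
  case (Suc j)
  then show ?case by (simp add: mapp_mmul mapp_vec_sp)
qed

definition shift_tail :: "nat \<Rightarrow> ((nat \<Rightarrow> complex) \<Rightarrow> (nat \<Rightarrow> complex))
    \<Rightarrow> (nat \<Rightarrow> nat \<Rightarrow> complex) \<Rightarrow> (nat \<Rightarrow> nat \<Rightarrow> complex)" where
  "shift_tail n R z = (\<lambda>j. if j \<in> {1..n} then R (z (Suc j)) else (\<lambda>_. 0))"

lemma shift_tail_Xcn:
  "z \<in> Xcn d (Suc n) \<Longrightarrow> (\<And>v. v \<in> Xc d \<Longrightarrow> R v \<in> Xc d) \<Longrightarrow> shift_tail n R z \<in> Xcn d n"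
  by (auto simp: Xcn_def shift_tail_def)

lemma shift_tail_in_Tplus:
  assumes z: "z \<in> Xcn d (Suc n)"
    and Lc: "\<forall>j\<in>{1..Suc n}. L j \<in> G0plus d \<and> c j \<in> Xr d \<and> z j = mapp d (lprod d L j) (cvec (c j))"
    and R_inv: "\<And>v. v \<in> vec_sp d \<Longrightarrow> R (mapp d (L 1) v) = v" and R_Xc: "\<And>v. v \<in> Xc d \<Longrightarrow> R v \<in> Xc d"
  shows "shift_tail n R z \<in> Tplus d n"
proof -
  have "R (z (Suc j)) = mapp d (lprod d (\<lambda>i. L (Suc i)) j) (cvec (c (Suc j)))" if "j \<in> {1..n}" for j
  proof -
    have "c (Suc j) \<in> Xr d" "z (Suc j) = mapp d (lprod d L (Suc j)) (cvec (c (Suc j)))"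
      using Lc that by auto
    then show ?thesis
      using mapp_lprod_Suc R_inv mapp_vec_sp by (simp add: Xr_def vec_sp_def cvec_def)
  qed
  then show ?thesis
    using shift_tail_Xcn[OF z R_Xc] Lc unfolding Tplus_def
    by (auto simp: shift_tail_def intro!: exI[of _ "\<lambda>i. L (Suc i)"] exI[of _ "\<lambda>i. c (Suc i)"])
qed

lemma Tplus_SucI:
  assumes z: "z \<in> Xcn d (Suc n)" and \<Lambda>: "\<Lambda> \<in> G0plus d" and c: "c \<in> Xr d" and z1: "z 1 = mapp d \<Lambda> (cvec c)"
    and R: "\<And>v. v \<in> vec_sp d \<Longrightarrow> mapp d \<Lambda> (R v) = v" and tail: "shift_tail n R z \<in> Tplus d n"
  shows "z \<in> Tplus d (Suc n)"
proof -
  obtain L c' where Lc: "\<forall>j\<in>{1..n}. L j \<in> G0plus d \<and> c' j \<in> Xr d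
      \<and> R (z (Suc j)) = mapp d (lprod d L j) (cvec (c' j))"
    using tail by (auto simp: Tplus_def shift_tail_def)
  define L' where "L' j = (if j = 1 then \<Lambda> else L (j - 1))" for j
  define c'' where "c'' j = (if j = 1 then c else c' (j - 1))" for j
  have lprod: "lprod d (\<lambda>i. L' (Suc i)) j = lprod d L j" for j
    by (induction j) (simp_all add: L'_def)
  have "z j = mapp d (lprod d L' j) (cvec (c'' j))" if j: "j \<in> {1..Suc n}" for j
  proof (cases "j = 1")
    case True
    then show ?thesis
      using mapp_lprod_Suc[of "cvec c" d L' 0] c z1 by (simp add: L'_def c''_def mapp_mid Xr_def vec_sp_def cvec_def)
  next
    case False
    then obtain i where i: "j = Suc i" "i \<in> {1..n}" using j by (cases j) auto
    have c'_vec: "cvec (c' i) \<in> vec_sp d"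
      using Lc i by (simp add: Xr_def vec_sp_def cvec_def)
    have "L' 1 = \<Lambda>" "c'' j = c' i" using i by (simp_all add: L'_def c''_def)
    then have "mapp d (lprod d L' j) (cvec (c'' j)) = mapp d \<Lambda> (mapp d (lprod d L i) (cvec (c' i)))"
      using mapp_lprod_Suc[OF c'_vec, of L' i] unfolding i(1) by (simp only: lprod)
    also have "\<dots> = mapp d \<Lambda> (R (z j))"
      using Lc i by simp
    also have "\<dots> = z j"
      using R z i by (simp add: Xcn_def Xc_def)
    finally show ?thesis ..
  qed
  moreover have "L' j \<in> G0plus d \<and> c'' j \<in> Xr d" if j: "j \<in> {1..Suc n}" for j
  proof (cases "j = 1")
    case False
    then obtain i where "j = Suc i" "i \<in> {1..n}" using j by (cases j) auto
    then show ?thesis using Lc by (simp add: L'_def c''_def)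
  qed (simp add: L'_def c''_def \<Lambda> c)
  ultimately show ?thesis
    using z unfolding Tplus_def by blast
qed

lemma tendsto_shift_tail:
  assumes "\<And>k. ((\<lambda>w. R (w 1) (w k)) \<longlongrightarrow> R (z 1) (z k)) F"
  shows "((\<lambda>w. shift_tail n (R (w 1)) w) \<longlongrightarrow> shift_tail n (R (z 1)) z) F"
proof (subst tendsto_fun_iff, intro allI)
  fix j
  show "((\<lambda>w. shift_tail n (R (w 1)) w j) \<longlongrightarrow> shift_tail n (R (z 1)) z j) F"
    using assms by (cases "j \<in> {1..n}") (auto simp: shift_tail_def)
qed

lemma eventually_openin_tendsto:
  assumes "openin (top_of_set S) T" "(f \<longlongrightarrow> l) F" "l \<in> T"
  shows "\<forall>\<^sub>F w in F. f w \<in> S \<longrightarrow> f w \<in> T"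
proof -
  obtain U where U: "open U" "T = S \<inter> U"
    using assms(1) by (auto simp: openin_open)
  then have "l \<in> U" using assms(3) by blast
  with U(1) have "\<forall>\<^sub>F w in F. f w \<in> U"
    by (rule topological_tendstoD[OF assms(2)])
  then show ?thesis
    using U(2) by (auto elim: eventually_mono)
qed

lemma eventually_Tplus_Suc:
  assumes d: "d \<ge> 1" and IH: "openin (top_of_set (Xcn d n)) (Tplus d n)" and z: "z \<in> Tplus d (Suc n)"
  shows "\<forall>\<^sub>F w in nhds z. w \<in> Xcn d (Suc n) \<longrightarrow> w \<in> Tplus d (Suc n)"
proof -
  obtain L c where zX: "z \<in> Xcn d (Suc n)"
    and Lc: "\<forall>j\<in>{1..Suc n}. L j \<in> G0plus d \<and> c j \<in> Xr d \<and> z j = mapp d (lprod d L j) (cvec (c j))"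
    using z by (auto simp: Tplus_def)
  have L1: "L 1 \<in> G0plus d" "c 1 \<in> Xr d" using Lc by auto
  then have "cvec (c 1) \<in> vec_sp d" by (simp add: Xr_def vec_sp_def cvec_def)
  then have z1: "mapp d (L 1) (cvec (c 1)) = z 1"
    using Lc mapp_lprod_Suc[of "cvec (c 1)" d L 0] by (simp add: mapp_mid)
  obtain R where
    ev: "\<forall>\<^sub>F u in nhds (z 1). u \<in> Xc d \<longrightarrow>
      (\<exists>\<Lambda>\<in>G0plus d. \<exists>c\<in>Xr d. u = mapp d \<Lambda> (cvec c) \<and> (\<forall>v\<in>vec_sp d. mapp d \<Lambda> (R u v) = v))
      \<and> (\<forall>v\<in>Xc d. R u v \<in> Xc d)"
    and R_inv: "\<And>v. v \<in> vec_sp d \<Longrightarrow> R (z 1) (mapp d (L 1) v) = v"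
    and R_cont: "\<And>U V v. (U \<longlongrightarrow> z 1) (nhds z) \<Longrightarrow> (V \<longlongrightarrow> v) (nhds z)
      \<Longrightarrow> ((\<lambda>t. R (U t) (V t)) \<longlongrightarrow> R (z 1) v) (nhds z)"
    by (rule G0plus_local_section[OF d L1, unfolded z1]) (rule that)
  have coord: "((\<lambda>w. w k) \<longlongrightarrow> z k) (nhds z)" for k
    using filterlim_ident[of "nhds z"] by (simp add: tendsto_fun_iff)
  have "z 1 \<in> Xc d" using zX by (simp add: Xcn_def)
  then have tail: "shift_tail n (R (z 1)) z \<in> Tplus d n"
    using eventually_nhds_x_imp_x[OF ev] shift_tail_in_Tplus[OF zX Lc R_inv] by blast
  have "((\<lambda>w. shift_tail n (R (w 1)) w) \<longlongrightarrow> shift_tail n (R (z 1)) z) (nhds z)"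
    by (intro tendsto_shift_tail R_cont coord)
  from eventually_compose_filterlim[OF ev coord] eventually_openin_tendsto[OF IH this tail]
  show ?thesis
  proof eventually_elim
    case (elim w)
    show ?case
    proof
      assume w: "w \<in> Xcn d (Suc n)"
      then have "w 1 \<in> Xc d" by (simp add: Xcn_def)
      with elim(1) have rep: "\<exists>\<Lambda>\<in>G0plus d. \<exists>c\<in>Xr d. w 1 = mapp d \<Lambda> (cvec c)
          \<and> (\<forall>v\<in>vec_sp d. mapp d \<Lambda> (R (w 1) v) = v)" and "\<forall>v\<in>Xc d. R (w 1) v \<in> Xc d"
        by blast+
      then have "shift_tail n (R (w 1)) w \<in> Tplus d n"
        using elim(2) shift_tail_Xcn[OF w] by blast
      with rep show "w \<in> Tplus d (Suc n)"
        using Tplus_SucI[OF w] by blast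
    qed
  qed
qed

theorem openin_Tplus:
  assumes "d \<ge> 1"
  shows "openin (top_of_set (Xcn d n)) (Tplus d n)"
proof (induction n)
  case 0
  have "Tplus d 0 = Xcn d 0" by (auto simp: Tplus_def)
  then show ?case by simp
next
  case (Suc n)
  show ?case
    unfolding openin_subopen[of _ "Tplus d (Suc n)"]
  proof
    fix z assume z: "z \<in> Tplus d (Suc n)"
    obtain S where "open S" "z \<in> S" "\<forall>w\<in>S. w \<in> Xcn d (Suc n) \<longrightarrow> w \<in> Tplus d (Suc n)"
      using eventually_Tplus_Suc[OF assms Suc.IH z] unfolding eventually_nhds by blast
    moreover have "z \<in> Xcn d (Suc n)" using z by (simp add: Tplus_def)
    ultimately show "\<exists>T. openin (top_of_set (Xcn d (Suc n))) T \<and> z \<in> T \<and> T \<subseteq> Tplus d (Suc n)"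
      by (intro exI[of _ "Xcn d (Suc n) \<inter> S"]) auto
  qed
qed

theorem lemma10:
  fixes d n :: nat
  assumes "d \<ge> 2" and "n \<ge> 1"
  shows "openin (top_of_set (Xcn d n)) (Tplus d n)"
  using openin_Tplus assms(1) by simp

end
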